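(* Let $n\ge3$, $\mathcal C,\mathcal P\in\mathbb R^n$ and $\mathcal A\in\Lambda^2\mathbb R^n$, and for $u\in\overline{\mathcal S}(\mathbb R^n)$ put $F(u)=\langle\mathcal C,X(u)\rangle+\langle\mathcal P,Y(u)\rangle+\langle\mathcal A,\omega(u)\rangle$. Suppose one of the following holds: (1) $\mathcal A=0$; (2) $\mathcal A$ is a simple two-form and $\mathcal C=0$; (3) $\mathcal A$ is a simple two-form and $\mathcal P=0$. Then the minimum of $F$ over $\{u:|u|=1\}$ is attained at some $u$ with $N(u)=|X(u)|=|Y(u)|=1$.
   Context: $\overline{\mathcal S}(\mathbb R^n)=\mathcal S\oplus\mathcal S$, where $\mathcal S$ is the complex spinor module of $\mathbb R^n$ with Hermitian inner product $\langle\cdot,\cdot\rangle$ (complex linear in the first slot) on which vectors act skew-Hermitian with $vw+wv=-2\langle v,w\rangle$; $\overline{\mathcal S}$ has direct-sum inner product, and a vector $e_l$ and an extra element $e_0$ act by $e_l(\psi_1,\psi_2)=(e_l\psi_1,-e_l\psi_2)$, $e_0(\psi_1,\psi_2)=(\psi_2,\psi_1)$. For the standard basis $\{e_i\}$ with summation: $N(u)=|u|^2$, $X(u)=\langle e_ie_0u,u\rangle e_i$, $Y(u)=\langle\mathbf ie_iu,u\rangle e_i$, $\omega_{ij}(u)=\operatorname{Im}\langle e_ie_je_0u,u\rangle$. The pairing of two-forms is $\langle\mathcal A,\omega\rangle=\sum_{i<j}\mathcal A_{ij}\omega_{ij}$. A two-form $\mathcal A$ is simple if $\mathcal A=a\,e_1'\wedge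 e_2'$ for some $a\in\mathbb R$ and some orthonormal $e_1',e_2'$. *)

theory Defs
  imports Complex_Main
begin

text \<open>Vectors of C^m are functions nat => complex (only indices < m matter);
  complex m x m matrices are functions nat => nat => complex.
  The basis vector e_{i+1} of R^n is indexed by i < n.\<close>

type_synonym cvec = "nat \<Rightarrow> complex"
type_synonym cmat = "nat \<Rightarrow> nat \<Rightarrow> complex"
type_synonym spinor2 = "cvec \<times> cvec"

definition mact :: "nat \<Rightarrow> cmat \<Rightarrow> cvec \<Rightarrow> cvec" where
  "mact m M \<psi> = (\<lambda>k. \<Sum>l<m. M k l * \<psi> l)"

definition cinner :: "nat \<Rightarrow> cvec \<Rightarrow> cvec \<Rightarrow> complex" where
  "cinner m \<psi> \<phi> = (\<Sum>k<m. \<psi> k * cnj (\<phi> k))"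

definition is_spinor_module :: "nat \<Rightarrow> nat \<Rightarrow> (nat \<Rightarrow> cmat) \<Rightarrow> bool" where
  "is_spinor_module n m E \<longleftrightarrow> m = 2 ^ (n div 2) \<and>
     (\<forall>i<n. \<forall>k<m. \<forall>l<m. E i k l = - cnj (E i l k)) \<and>
     (\<forall>i<n. \<forall>j<n. \<forall>k<m. \<forall>l<m.
        (\<Sum>p<m. E i k p * E j p l + E j k p * E i p l) = (if i = j \<and> k = l then -2 else 0))"

definition dinner :: "nat \<Rightarrow> spinor2 \<Rightarrow> spinor2 \<Rightarrow> complex" where
  "dinner m u v = cinner m (fst u) (fst v) + cinner m (snd u) (snd v)"

text \<open>action of e_l on S + S\<close>
definition dvec :: "nat \<Rightarrow> (nat \<Rightarrow> cmat) \<Rightarrow> nat \<Rightarrow> spinor2 \<Rightarrow> spinor2" where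
  "dvec m E l u = (mact m (E l) (fst u), \<lambda>k. - mact m (E l) (snd u) k)"

text \<open>action of e_0 on S + S\<close>
definition de0 :: "spinor2 \<Rightarrow> spinor2" where
  "de0 u = (snd u, fst u)"

definition dscale :: "complex \<Rightarrow> spinor2 \<Rightarrow> spinor2" where
  "dscale c u = (\<lambda>k. c * fst u k, \<lambda>k. c * snd u k)"

definition Nsp :: "nat \<Rightarrow> spinor2 \<Rightarrow> real" where
  "Nsp m u = Re (dinner m u u)"

definition spnorm :: "nat \<Rightarrow> spinor2 \<Rightarrow> real" where
  "spnorm m u = sqrt (Nsp m u)"

definition Xsp :: "nat \<Rightarrow> (nat \<Rightarrow> cmat) \<Rightarrow> spinor2 \<Rightarrow> nat \<Rightarrow> real" where
  "Xsp m E u = (\<lambda>i. Re (dinner m (dvec m E i (de0 u)) u))"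

definition Ysp :: "nat \<Rightarrow> (nat \<Rightarrow> cmat) \<Rightarrow> spinor2 \<Rightarrow> nat \<Rightarrow> real" where
  "Ysp m E u = (\<lambda>i. Re (dinner m (dscale \<i> (dvec m E i u)) u))"

definition omega :: "nat \<Rightarrow> (nat \<Rightarrow> cmat) \<Rightarrow> spinor2 \<Rightarrow> nat \<Rightarrow> nat \<Rightarrow> real" where
  "omega m E u = (\<lambda>i j. Im (dinner m (dvec m E i (dvec m E j (de0 u))) u))"

definition rinner :: "nat \<Rightarrow> (nat \<Rightarrow> real) \<Rightarrow> (nat \<Rightarrow> real) \<Rightarrow> real" where
  "rinner n x y = (\<Sum>i<n. x i * y i)"

definition rnorm :: "nat \<Rightarrow> (nat \<Rightarrow> real) \<Rightarrow> real" where
  "rnorm n x = sqrt (rinner n x x)"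

definition is_two_form :: "nat \<Rightarrow> (nat \<Rightarrow> nat \<Rightarrow> real) \<Rightarrow> bool" where
  "is_two_form n A \<longleftrightarrow> (\<forall>i<n. \<forall>j<n. A i j = - A j i)"

definition pair2 :: "nat \<Rightarrow> (nat \<Rightarrow> nat \<Rightarrow> real) \<Rightarrow> (nat \<Rightarrow> nat \<Rightarrow> real) \<Rightarrow> real" where
  "pair2 n A w = (\<Sum>i<n. \<Sum>j\<in>{i<..<n}. A i j * w i j)"

definition simple_two_form :: "nat \<Rightarrow> (nat \<Rightarrow> nat \<Rightarrow> real) \<Rightarrow> bool" where
  "simple_two_form n A \<longleftrightarrow> (\<exists>a e1 e2. rinner n e1 e1 = 1 \<and> rinner n e2 e2 = 1 \<and> rinner n e1 e2 = 0 \<and>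
      (\<forall>i<n. \<forall>j<n. A i j = a * (e1 i * e2 j - e1 j * e2 i)))"

definition Ffun :: "nat \<Rightarrow> nat \<Rightarrow> (nat \<Rightarrow> cmat) \<Rightarrow> (nat \<Rightarrow> real) \<Rightarrow> (nat \<Rightarrow> real)
     \<Rightarrow> (nat \<Rightarrow> nat \<Rightarrow> real) \<Rightarrow> spinor2 \<Rightarrow> real" where
  "Ffun n m E C P A u = rinner n C (Xsp m E u) + rinner n P (Ysp m E u) + pair2 n A (omega m E u)"

end

theory Submission
  imports Defs "HOL-Library.Function_Algebras" "HOL-Library.Product_Plus"
begin

text \<open>
  Each functional has the form F(u) = Re <H u, u>, where H is assembled from Clifford
  multiplications: the X-term contributes C e0, the Y-term i P, and a simple form a e1 \<and> e2 the
  operator -i a e1 e2 e0. Expanding |H u|^2 with the Clifford relations bounds it by L^2 |u|^2 for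
  an explicit L, so F >= -L on the unit sphere by Cauchy-Schwarz. Conversely, for orthonormal x, y
  (and n >= 3) some unit spinor is fixed by both x e0 and i y, and it has X = x and Y = y; choosing
  x and y adapted to C, P and the plane of e1, e2 makes it attain -L. The case P = 0 reduces to the
  case C = 0 through the twist (1 + i e0) / sqrt 2, which exchanges X and Y up to sign and leaves
  omega unchanged.
\<close>

section \<open>The Hermitian form on S + S\<close>

lemma dinner_add_left: "dinner m (u + v) w = dinner m u w + dinner m v w"
  by (simp add: dinner_def cinner_def sum.distrib distrib_right)

lemma dinner_add_right: "dinner m w (u + v) = dinner m w u + dinner m w v"
  by (simp add: dinner_def cinner_def sum.distrib distrib_left)

lemma dinner_minus_left: "dinner m (- u) w = - dinner m u w"
  by (simp add: dinner_def cinner_def sum_negf)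

lemma dinner_minus_right: "dinner m w (- u) = - dinner m w u"
  by (simp add: dinner_def cinner_def sum_negf)

lemma dinner_zero_left: "dinner m 0 w = 0"
  by (simp add: dinner_def cinner_def)

lemma dinner_scale_left: "dinner m (dscale c u) w = c * dinner m u w"
  by (simp add: dinner_def cinner_def dscale_def sum_distrib_left distrib_left mult.assoc)

lemma dinner_scale_right: "dinner m w (dscale c u) = cnj c * dinner m w u"
  by (simp add: dinner_def cinner_def dscale_def sum_distrib_left distrib_left mult_ac)

lemma dinner_commute: "dinner m w u = cnj (dinner m u w)"
  by (simp add: dinner_def cinner_def mult.commute)

lemma Re_dinner_commute: "Re (dinner m w u) = Re (dinner m u w)"
  by (subst dinner_commute) simp

lemma Re_dinner_self_eq: "Re (dinner m u u) = (\<Sum>k<m. (cmod (fst u k))\<^sup>2) + (\<Sum>k<m. (cmod (snd u k))\<^sup>2)"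
  by (simp add: dinner_def cinner_def flip: complex_norm_square)

lemma Re_dinner_self_nonneg: "0 \<le> Re (dinner m u u)"
  unfolding Re_dinner_self_eq by (intro add_nonneg_nonneg sum_nonneg) auto

lemma Re_dinner_add_self:
  "Re (dinner m (h + k) (h + k)) = Re (dinner m h h) + Re (dinner m k k) + 2 * Re (dinner m h k)"
  using Re_dinner_commute[of m k h] by (simp add: dinner_add_left dinner_add_right)

lemma dscale_dscale [simp]: "dscale c (dscale d u) = dscale (c * d) u"
  by (simp add: dscale_def mult.assoc)

lemma dscale_one [simp]: "dscale 1 u = u"
  by (simp add: dscale_def)

lemma dscale_zero [simp]: "dscale 0 u = 0"
  by (simp add: dscale_def zero_prod_def zero_fun_def)

lemma dscale_add: "dscale c (u + w) = dscale c u + dscale c w"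
  by (simp add: dscale_def fun_eq_iff distrib_left)

lemma dscale_diff: "dscale c (u - w) = dscale c u - dscale c w"
  by (simp add: dscale_def fun_eq_iff right_diff_distrib)

lemma dscale_minus: "dscale c (- u) = - dscale c u"
  by (simp add: dscale_def fun_eq_iff)

lemma dscale_minus_left: "dscale (- c) u = - dscale c u"
  by (simp add: dscale_def fun_eq_iff prod_eq_iff)

lemma de0_de0 [simp]: "de0 (de0 u) = u"
  by (simp add: de0_def)

lemma de0_add: "de0 (u + w) = de0 u + de0 w"
  by (simp add: de0_def)

lemma de0_dscale: "de0 (dscale c u) = dscale c (de0 u)"
  by (simp add: de0_def dscale_def)

lemma dinner_de0_left: "dinner m (de0 u) w = dinner m u (de0 w)"
  by (simp add: dinner_def de0_def)

lemma dinner_de0_de0: "dinner m (de0 u) (de0 w) = dinner m u w"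
  by (simp add: dinner_def de0_def)

lemma Im_dinner_de0_self: "Im (dinner m (de0 v) v) = 0"
proof -
  have "dinner m (de0 v) v = cinner m (snd v) (fst v) + cnj (cinner m (snd v) (fst v))"
    by (simp add: dinner_def de0_def cinner_def mult.commute)
  then show ?thesis by simp
qed

lemma quadratic_nonneg_imp_discrim_le:
  fixes A R B :: real
  assumes nonneg: "\<And>t. 0 \<le> A + 2 * t * R + t\<^sup>2 * B" and "0 \<le> B"
  shows "R\<^sup>2 \<le> A * B"
proof (cases "B = 0")
  case True
  have "R = 0"
  proof (rule ccontr)
    assume "R \<noteq> 0"
    then have "A + 2 * (- (A + 1) / (2 * R)) * R + (- (A + 1) / (2 * R))\<^sup>2 * B = -1"
      using True by (simp add: field_simps)
    then show False using nonneg[of "- (A + 1) / (2 * R)"] by linarith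
  qed
  then show ?thesis using True by simp
next
  case False
  then have B: "0 < B" using \<open>0 \<le> B\<close> by simp
  have "0 \<le> A + 2 * (- R / B) * R + (- R / B)\<^sup>2 * B" by (rule nonneg)
  also have "\<dots> = A - R\<^sup>2 / B" using B by (simp add: field_simps power2_eq_square)
  finally show ?thesis using B by (simp add: field_simps)
qed

lemma Re_dinner_power2_le: "(Re (dinner m h v))\<^sup>2 \<le> Re (dinner m h h) * Re (dinner m v v)"
proof (rule quadratic_nonneg_imp_discrim_le[OF _ Re_dinner_self_nonneg])
  fix t :: real
  have "Re (dinner m (h + dscale t v) (h + dscale t v))
    = Re (dinner m h h) + 2 * t * Re (dinner m h v) + t\<^sup>2 * Re (dinner m v v)"
    by (simp add: Re_dinner_add_self dinner_scale_left dinner_scale_right power2_eq_square)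
  then show "0 \<le> Re (dinner m h h) + 2 * t * Re (dinner m h v) + t\<^sup>2 * Re (dinner m v v)"
    using Re_dinner_self_nonneg[of m "h + dscale t v"] by simp
qed

lemma abs_Re_dinner_le:
  assumes "Re (dinner m h h) \<le> L\<^sup>2 * Re (dinner m v v)" "0 \<le> L"
  shows "\<bar>Re (dinner m h v)\<bar> \<le> L * Re (dinner m v v)"
proof (rule power2_le_imp_le)
  have "\<bar>Re (dinner m h v)\<bar>\<^sup>2 \<le> Re (dinner m h h) * Re (dinner m v v)"
    using Re_dinner_power2_le by simp
  also have "\<dots> \<le> L\<^sup>2 * Re (dinner m v v) * Re (dinner m v v)"
    using assms(1) Re_dinner_self_nonneg by (rule mult_right_mono)
  finally show "\<bar>Re (dinner m h v)\<bar>\<^sup>2 \<le> (L * Re (dinner m v v))\<^sup>2"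
    by (simp add: power2_eq_square mult_ac)
  show "0 \<le> L * Re (dinner m v v)" using assms(2) Re_dinner_self_nonneg by simp
qed

lemma Re_dinner_add_ge:
  assumes "Re (dinner m h h) = a * Re (dinner m v v)" "Re (dinner m k k) = b * Re (dinner m v v)"
    and "\<bar>Re (dinner m h k)\<bar> \<le> c * Re (dinner m v v)" and "0 \<le> a + b + 2 * c"
  shows "- sqrt (a + b + 2 * c) * Re (dinner m v v) \<le> Re (dinner m (h + k) v)"
proof -
  have "Re (dinner m (h + k) (h + k)) \<le> (sqrt (a + b + 2 * c))\<^sup>2 * Re (dinner m v v)"
    using assms by (simp add: Re_dinner_add_self algebra_simps)
  then have "\<bar>Re (dinner m (h + k) v)\<bar> \<le> sqrt (a + b + 2 * c) * Re (dinner m v v)"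
    using assms(4) by (intro abs_Re_dinner_le) auto
  then show ?thesis by linarith
qed

text \<open>Either u + J u is a nonzero fixed vector of J, or J u = - u and then Q u is one.\<close>

lemma exists_fixed_vector:
  fixes J Q :: "'a::ab_group_add \<Rightarrow> 'a"
  assumes "u \<in> S" "u \<noteq> 0"
    and add: "\<And>a b. J (a + b) = J a + J b" "\<And>a b. Q (a + b) = Q a + Q b"
    and closed: "\<And>a. a \<in> S \<Longrightarrow> J a \<in> S" "\<And>a. a \<in> S \<Longrightarrow> Q a \<in> S"
      "\<And>a b. a \<in> S \<Longrightarrow> b \<in> S \<Longrightarrow> a + b \<in> S"
    and invol: "\<And>a. a \<in> S \<Longrightarrow> J (J a) = a" "\<And>a. a \<in> S \<Longrightarrow> Q (Q a) = a"
    and anticomm: "\<And>a. a \<in> S \<Longrightarrow> Q (J a) = - J (Q a)"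
  shows "\<exists>w\<in>S. w \<noteq> 0 \<and> J w = w"
proof (cases "u + J u = 0")
  case False
  have "J (u + J u) = u + J u" using add(1) invol(1)[OF \<open>u \<in> S\<close>] by (simp add: add.commute)
  then show ?thesis using False \<open>u \<in> S\<close> closed by blast
next
  case True
  then have Ju: "J u = - u" by (simp add: eq_neg_iff_add_eq_0 add.commute)
  have Q0: "Q 0 = 0" using add(2)[of 0 0] by simp
  have "Q (- u) = - Q u" using add(2)[of u "- u"] Q0 by (simp add: eq_neg_iff_add_eq_0 add.commute)
  then have "J (Q u) = Q u" using anticomm[OF \<open>u \<in> S\<close>] Ju by (metis minus_minus)
  moreover have "Q u \<noteq> 0" using invol(2)[OF \<open>u \<in> S\<close>] Q0 \<open>u \<noteq> 0\<close> by auto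
  ultimately show ?thesis using closed(2) \<open>u \<in> S\<close> by blast
qed

section \<open>Euclidean vectors and two-forms\<close>

lemma rinner_commute: "rinner n x y = rinner n y x"
  by (simp add: rinner_def mult.commute)

lemma rinner_self_nonneg: "0 \<le> rinner n x x"
  by (simp add: rinner_def sum_nonneg)

lemma rnorm_nonneg: "0 \<le> rnorm n x"
  by (simp add: rnorm_def rinner_self_nonneg)

lemma rnorm_power2: "(rnorm n x)\<^sup>2 = rinner n x x"
  by (simp add: rnorm_def rinner_self_nonneg)

lemma rinner_cong:
  "(\<And>i. i < n \<Longrightarrow> x i = x' i) \<Longrightarrow> (\<And>i. i < n \<Longrightarrow> y i = y' i) \<Longrightarrow> rinner n x y = rinner n x' y'"
  by (simp add: rinner_def)

lemma rinner_lincomb_left: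
  "rinner n (\<lambda>i. a * u i + b * v i) w = a * rinner n u w + b * rinner n v w"
  by (simp add: rinner_def sum.distrib sum_distrib_left algebra_simps)

lemma rinner_lincomb_right:
  "rinner n w (\<lambda>i. a * u i + b * v i) = a * rinner n w u + b * rinner n w v"
  by (simp add: rinner_def sum.distrib sum_distrib_left algebra_simps)

lemma rinner_scale_left: "rinner n (\<lambda>i. a * u i) w = a * rinner n u w"
  by (simp add: rinner_def sum_distrib_left algebra_simps)

lemma rinner_diff_left: "rinner n (\<lambda>i. u i - v i) w = rinner n u w - rinner n v w"
  by (simp add: rinner_def left_diff_distrib sum_subtractf)

lemma rinner_sum_left: "rinner n (\<lambda>i. \<Sum>j<d. c j * g j i) w = (\<Sum>j<d. c j * rinner n (g j) w)"
proof -
  have "rinner n (\<lambda>i. \<Sum>j<d. c j * g j i) w = (\<Sum>i<n. \<Sum>j<d. c j * (g j i * w i))"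
    by (simp add: rinner_def sum_distrib_right mult.assoc)
  also have "\<dots> = (\<Sum>j<d. \<Sum>i<n. c j * (g j i * w i))"
    by (rule sum.swap)
  finally show ?thesis by (simp add: rinner_def sum_distrib_left)
qed

lemma rinner_basis_left: "k < n \<Longrightarrow> rinner n (\<lambda>i. if i = k then 1 else 0) w = w k"
  unfolding rinner_def by (simp add: if_distrib[of "\<lambda>a. a * _"] cong: if_cong)

lemma rinner_divide_left: "rinner n (\<lambda>i. v i / c) w = rinner n v w / c"
  by (simp add: rinner_def sum_divide_distrib)

lemma rinner_divide_right: "rinner n w (\<lambda>i. v i / c) = rinner n w v / c"
  by (simp add: rinner_def sum_divide_distrib)

lemma rinner_self_eq_0: "rinner n v v = 0 \<Longrightarrow> i < n \<Longrightarrow> v i = 0"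
  by (simp add: rinner_def sum_nonneg_eq_0_iff)

lemma rinner_normalize:
  assumes "rinner n v v \<noteq> 0"
  shows "rinner n (\<lambda>i. v i / rnorm n v) (\<lambda>i. v i / rnorm n v) = 1"
  using assms rnorm_power2[of n v] by (simp add: rinner_divide_left rinner_divide_right power2_eq_square)

lemma rnorm_eq_one: "rinner n x x = 1 \<Longrightarrow> (\<And>i. i < n \<Longrightarrow> z i = x i) \<Longrightarrow> rnorm n z = 1"
  unfolding rnorm_def by (subst rinner_cong[of n z x z x]) simp_all

lemma rnorm_le_of_rinner_self_le:
  assumes "rinner n z z \<le> rnorm n z * N" "0 \<le> N"
  shows "rnorm n z \<le> N"
proof (cases "rnorm n z = 0")
  case False
  then have "0 < rnorm n z" using rnorm_nonneg[of n z] by simp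
  moreover have "rnorm n z * rnorm n z \<le> rnorm n z * N"
    using assms(1) rnorm_power2[of n z] by (simp add: power2_eq_square)
  ultimately show ?thesis by simp
qed (use assms in simp)

lemma eq_of_rinner_eq_one:
  assumes "rinner n x x = 1" "rinner n x z = 1" "rinner n z z \<le> 1" "i < n"
  shows "z i = x i"
proof -
  have "(\<Sum>i<n. (z i - x i)\<^sup>2) = rinner n z z - 2 * rinner n x z + rinner n x x"
    by (simp add: rinner_def power2_eq_square algebra_simps sum.distrib sum_subtractf sum_distrib_left)
  also have "\<dots> \<le> 0" using assms by simp
  finally have "(\<Sum>i<n. (z i - x i)\<^sup>2) = 0" by (meson antisym sum_nonneg zero_le_power2)
  then show ?thesis using assms(4) by (simp add: sum_nonneg_eq_0_iff)
qed

lemma rinner_frame: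
  assumes "rinner n g1 g1 = 1" "rinner n g2 g2 = 1" "rinner n g1 g2 = 0"
  shows "rinner n (\<lambda>i. a * g1 i + b * g2 i) (\<lambda>i. c * g1 i + d * g2 i) = a * c + b * d"
  using assms rinner_commute[of n g2 g1] by (simp add: rinner_lincomb_left rinner_lincomb_right)

definition orthonormal :: "nat \<Rightarrow> nat \<Rightarrow> (nat \<Rightarrow> nat \<Rightarrow> real) \<Rightarrow> bool" where
  "orthonormal n d g \<longleftrightarrow> (\<forall>j<d. \<forall>k<d. rinner n (g j) (g k) = (if j = k then 1 else 0))"

lemma orthonormal_single: "rinner n x x = 1 \<Longrightarrow> orthonormal n 1 (\<lambda>j. x)"
  by (simp add: orthonormal_def)

lemma orthonormal_pair:
  "rinner n x x = 1 \<Longrightarrow> rinner n y y = 1 \<Longrightarrow> rinner n x y = 0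
    \<Longrightarrow> orthonormal n 2 (\<lambda>j. if j = 0 then x else y)"
  by (auto simp: orthonormal_def less_2_cases_iff rinner_commute[of n y x])

definition residual :: "nat \<Rightarrow> (nat \<Rightarrow> nat \<Rightarrow> real) \<Rightarrow> nat \<Rightarrow> nat \<Rightarrow> real" where
  "residual d g k = (\<lambda>i. (if i = k then 1 else 0) - (\<Sum>j<d. g j k * g j i))"

lemma rinner_residual_left:
  "k < n \<Longrightarrow> rinner n (residual d g k) w = w k - (\<Sum>j<d. g j k * rinner n (g j) w)"
  by (simp add: residual_def rinner_diff_left rinner_sum_left rinner_basis_left)

lemma rinner_residual_orthogonal:
  assumes "orthonormal n d g" "k < n" "l < d"
  shows "rinner n (residual d g k) (g l) = 0"
proof -
  have "(\<Sum>j<d. g j k * rinner n (g j) (g l)) = (\<Sum>j<d. if j = l then g l k else 0)"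
    using assms by (intro sum.cong) (auto simp: orthonormal_def)
  then show ?thesis using assms by (simp add: rinner_residual_left)
qed

lemma rinner_residual_self:
  assumes "orthonormal n d g" "k < n"
  shows "rinner n (residual d g k) (residual d g k) = 1 - (\<Sum>j<d. (g j k)\<^sup>2)"
proof -
  have "(\<Sum>j<d. g j k * rinner n (g j) (residual d g k)) = 0"
    using rinner_residual_orthogonal[OF assms] by (simp add: rinner_commute[of n "g _"])
  then have "rinner n (residual d g k) (residual d g k) = residual d g k k"
    using rinner_residual_left[OF assms(2), of d g "residual d g k"] by simp
  then show ?thesis by (simp add: residual_def power2_eq_square)
qed

text \<open>Bessel's inequality: the squared lengths of the first d + 1 residuals add up to at least
  (d + 1) - d = 1.\<close>

lemma exists_nonzero_residual:
  assumes "d < n" and g: "orthonormal n d g"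
  shows "\<exists>k<Suc d. rinner n (residual d g k) (residual d g k) \<noteq> 0"
proof -
  have coord_le: "(\<Sum>k<Suc d. (g j k)\<^sup>2) \<le> 1" if "j < d" for j
  proof -
    have "(\<Sum>k<Suc d. (g j k)\<^sup>2) \<le> (\<Sum>k<n. (g j k)\<^sup>2)"
      using \<open>d < n\<close> by (intro sum_mono2) auto
    also have "\<dots> = 1" using g that by (simp add: orthonormal_def rinner_def power2_eq_square)
    finally show ?thesis .
  qed
  have "(\<Sum>k<Suc d. rinner n (residual d g k) (residual d g k)) = (\<Sum>k<Suc d. 1 - (\<Sum>j<d. (g j k)\<^sup>2))"
    using assms by (intro sum.cong) (simp_all add: rinner_residual_self)
  also have "\<dots> = Suc d - (\<Sum>k<Suc d. \<Sum>j<d. (g j k)\<^sup>2)"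
    by (simp add: sum_subtractf)
  also have "(\<Sum>k<Suc d. \<Sum>j<d. (g j k)\<^sup>2) = (\<Sum>j<d. \<Sum>k<Suc d. (g j k)\<^sup>2)"
    by (rule sum.swap)
  finally have total: "(\<Sum>k<Suc d. rinner n (residual d g k) (residual d g k))
      = Suc d - (\<Sum>j<d. \<Sum>k<Suc d. (g j k)\<^sup>2)" .
  have "(\<Sum>j<d. \<Sum>k<Suc d. (g j k)\<^sup>2) \<le> (\<Sum>j<d. 1)"
    by (intro sum_mono coord_le) simp
  then have "(\<Sum>k<Suc d. rinner n (residual d g k) (residual d g k)) \<noteq> 0"
    unfolding total by simp
  then show ?thesis by (metis (mono_tags, lifting) lessThan_iff sum.neutral)
qed

lemma exists_unit_orthogonal:
  assumes "d < n" and g: "orthonormal n d g"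
  shows "\<exists>z. rinner n z z = 1 \<and> (\<forall>j<d. rinner n z (g j) = 0)"
proof -
  obtain k where k: "k < Suc d" "rinner n (residual d g k) (residual d g k) \<noteq> 0"
    using exists_nonzero_residual[OF assms] by blast
  define z where "z = (\<lambda>i. residual d g k i / rnorm n (residual d g k))"
  have "rinner n z z = 1" unfolding z_def using k(2) by (rule rinner_normalize)
  moreover have "rinner n z (g j) = 0" if "j < d" for j
    using rinner_residual_orthogonal[OF g, of k j] k(1) \<open>d < n\<close> that
    by (simp add: z_def rinner_divide_left)
  ultimately show ?thesis by blast
qed

lemma exists_unit_orthogonal_multiple:
  assumes "d < n" and g: "orthonormal n d g" and v: "\<forall>j<d. rinner n v (g j) = 0"
  shows "\<exists>z a. rinner n z z = 1 \<and> (\<forall>j<d. rinner n z (g j) = 0) \<and> (\<forall>i<n. v i = a * z i)"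
proof (cases "rinner n v v = 0")
  case True
  obtain z where "rinner n z z = 1" "\<forall>j<d. rinner n z (g j) = 0"
    using exists_unit_orthogonal[OF assms(1,2)] by blast
  moreover have "\<forall>i<n. v i = 0 * z i" using True rinner_self_eq_0 by simp
  ultimately show ?thesis by blast
next
  case False
  define z where "z = (\<lambda>i. v i / rnorm n v)"
  have "rnorm n v \<noteq> 0" using False rnorm_power2[of n v] by auto
  then have "\<forall>i<n. v i = rnorm n v * z i" by (simp add: z_def)
  moreover have "rinner n z z = 1" unfolding z_def using False by (rule rinner_normalize)
  moreover have "\<forall>j<d. rinner n z (g j) = 0" using v by (simp add: z_def rinner_divide_left)
  ultimately show ?thesis by blast
qed

lemma exists_unit_orthogonal_pair:
  assumes "3 \<le> n" "rinner n x x = 1" "rinner n y y = 1" "rinner n x y = 0"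
  shows "\<exists>z. rinner n z z = 1 \<and> rinner n z x = 0 \<and> rinner n z y = 0"
proof -
  obtain z where z: "rinner n z z = 1" "\<forall>j<2::nat. rinner n z (if j = 0 then x else y) = 0"
    using exists_unit_orthogonal[OF _ orthonormal_pair[OF assms(2-4)]] assms(1) by auto
  have "rinner n z x = 0" using z(2)[rule_format, of 0] by simp
  moreover have "rinner n z y = 0" using z(2)[rule_format, of 1] by simp
  ultimately show ?thesis using z(1) by blast
qed

lemma exists_orthonormal_frame:
  assumes "2 \<le> n"
  shows "\<exists>g1 g2 c1 c2 p1 p2. rinner n g1 g1 = 1 \<and> rinner n g2 g2 = 1 \<and> rinner n g1 g2 = 0 \<and>
     (\<forall>i<n. C i = c1 * g1 i + c2 * g2 i) \<and> (\<forall>i<n. P i = p1 * g1 i + p2 * g2 i)"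
proof -
  obtain g1 c1 where g1: "rinner n g1 g1 = 1" "\<forall>i<n. C i = c1 * g1 i"
    using exists_unit_orthogonal_multiple[of 0 n g C for g] assms by (auto simp: orthonormal_def)
  define b where "b = (\<lambda>i. P i - rinner n P g1 * g1 i)"
  have "rinner n b g1 = 0"
    using g1(1) by (simp add: b_def rinner_diff_left rinner_scale_left)
  then obtain g2 t where g2: "rinner n g2 g2 = 1" "rinner n g2 g1 = 0" "\<forall>i<n. b i = t * g2 i"
    using exists_unit_orthogonal_multiple[OF _ orthonormal_single[OF g1(1)], of b] assms by auto
  have "\<forall>i<n. C i = c1 * g1 i + 0 * g2 i" "\<forall>i<n. P i = rinner n P g1 * g1 i + t * g2 i"
    using g1(2) g2(3) by (simp_all add: b_def algebra_simps)
  then show ?thesis using g1(1) g2(1,2) rinner_commute[of n g1 g2] by metis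
qed

text \<open>With e the sign of c1 p2 - c2 p1, al = c1 + e p2 and be = c2 - e p1, the unit vectors
  x = - (al g1 + be g2) / L and y = e (be g1 - al g2) / L attain the value
  - (al^2 + be^2) / L = - L.\<close>

lemma orthonormal_pair_attaining_in_frame:
  assumes g: "rinner n g1 g1 = 1" "rinner n g2 g2 = 1" "rinner n g1 g2 = 0"
    and C: "\<forall>i<n. C i = c1 * g1 i + c2 * g2 i" and P: "\<forall>i<n. P i = p1 * g1 i + p2 * g2 i"
  obtains x y where "rinner n x x = 1" "rinner n y y = 1" "rinner n x y = 0"
    "rinner n C x + rinner n P y = - sqrt (c1\<^sup>2 + c2\<^sup>2 + p1\<^sup>2 + p2\<^sup>2 + 2 * \<bar>c1 * p2 - c2 * p1\<bar>)"
proof -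
  have C_eq: "rinner n C w = rinner n (\<lambda>i. c1 * g1 i + c2 * g2 i) w"
    and P_eq: "rinner n P w = rinner n (\<lambda>i. p1 * g1 i + p2 * g2 i) w" for w
    using C P by (auto intro: rinner_cong)
  define e :: real where "e = (if 0 \<le> c1 * p2 - c2 * p1 then 1 else -1)"
  define al where "al = c1 + e * p2"
  define be where "be = c2 - e * p1"
  define L where "L = sqrt (c1\<^sup>2 + c2\<^sup>2 + p1\<^sup>2 + p2\<^sup>2 + 2 * \<bar>c1 * p2 - c2 * p1\<bar>)"
  have LL: "L * L = al * al + be * be"
    by (simp add: L_def al_def be_def e_def power2_eq_square algebra_simps)
  show ?thesis
  proof (cases "L = 0")
    case True
    then have "c1 = 0 \<and> c2 = 0 \<and> p1 = 0 \<and> p2 = 0"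
      by (simp add: L_def add_nonneg_eq_0_iff)
    then show ?thesis using that[OF g] True by (simp add: C_eq P_eq) (simp add: rinner_def)
  next
    case False
    define x where "x = (\<lambda>i. (- al / L) * g1 i + (- be / L) * g2 i)"
    define y where "y = (\<lambda>i. (e * be / L) * g1 i + (- e * al / L) * g2 i)"
    have "rinner n x x = (al * al + be * be) / (L * L)"
      unfolding x_def rinner_frame[OF g] by (simp add: add_divide_distrib)
    moreover have "rinner n y y = (al * al + be * be) / (L * L)"
      unfolding y_def rinner_frame[OF g] e_def by (simp add: add_divide_distrib)
    ultimately have "rinner n x x = 1" "rinner n y y = 1"
      using False LL by auto
    moreover have "rinner n x y = 0"
      unfolding x_def y_def rinner_frame[OF g] by (simp add: field_simps)
    moreover have "rinner n C x + rinner n P y = - (al * al + be * be) / L"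
      unfolding C_eq P_eq x_def y_def rinner_frame[OF g] al_def be_def
      using False by (simp add: field_simps)
    then have "rinner n C x + rinner n P y = - L"
      using False by (simp add: LL[symmetric])
    ultimately show ?thesis using that by (simp add: L_def)
  qed
qed

lemma exists_orthonormal_pair_attaining:
  assumes "2 \<le> n"
  obtains D x y where "0 \<le> D" "D\<^sup>2 = rinner n C C * rinner n P P - (rinner n P C)\<^sup>2"
    "rinner n x x = 1" "rinner n y y = 1" "rinner n x y = 0"
    "rinner n C x + rinner n P y = - sqrt (rinner n C C + rinner n P P + 2 * D)"
proof -
  obtain g1 g2 c1 c2 p1 p2 where g: "rinner n g1 g1 = 1" "rinner n g2 g2 = 1" "rinner n g1 g2 = 0"
    and Cg: "\<forall>i<n. C i = c1 * g1 i + c2 * g2 i" and Pg: "\<forall>i<n. P i = p1 * g1 i + p2 * g2 i"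
    using exists_orthonormal_frame[OF assms] by blast
  have "rinner n C C = c1\<^sup>2 + c2\<^sup>2"
    using rinner_cong[of n C "\<lambda>i. c1 * g1 i + c2 * g2 i" C "\<lambda>i. c1 * g1 i + c2 * g2 i"] Cg
    by (simp add: rinner_frame[OF g] power2_eq_square)
  moreover have "rinner n P P = p1\<^sup>2 + p2\<^sup>2"
    using rinner_cong[of n P "\<lambda>i. p1 * g1 i + p2 * g2 i" P "\<lambda>i. p1 * g1 i + p2 * g2 i"] Pg
    by (simp add: rinner_frame[OF g] power2_eq_square)
  moreover have "rinner n P C = p1 * c1 + p2 * c2"
    using rinner_cong[of n P "\<lambda>i. p1 * g1 i + p2 * g2 i" C "\<lambda>i. c1 * g1 i + c2 * g2 i"] Pg Cg
    by (simp add: rinner_frame[OF g])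
  moreover obtain x y where "rinner n x x = 1" "rinner n y y = 1" "rinner n x y = 0"
    "rinner n C x + rinner n P y = - sqrt (c1\<^sup>2 + c2\<^sup>2 + p1\<^sup>2 + p2\<^sup>2 + 2 * \<bar>c1 * p2 - c2 * p1\<bar>)"
    using orthonormal_pair_attaining_in_frame[OF g Cg Pg] by blast
  ultimately show ?thesis
    using that[of "\<bar>c1 * p2 - c2 * p1\<bar>" x y] by (simp add: power2_eq_square algebra_simps)
qed

lemma exists_rotation_aligned:
  fixes p1 p2 \<sigma> :: real
  assumes "\<sigma> * \<sigma> = 1"
  obtains c s where "c\<^sup>2 + s\<^sup>2 = 1" "- s * p1 + c * p2 = 0" "c * p1 + s * p2 = \<sigma> * sqrt (p1\<^sup>2 + p2\<^sup>2)"
proof (cases "sqrt (p1\<^sup>2 + p2\<^sup>2) = 0")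
  case True
  then have "p1 = 0" "p2 = 0" by (auto simp: add_nonneg_eq_0_iff)
  then show ?thesis using that[of 1 0] by simp
next
  case False
  define r where "r = sqrt (p1\<^sup>2 + p2\<^sup>2)"
  have r: "0 < r" "r * r = p1\<^sup>2 + p2\<^sup>2"
    using False by (simp_all add: r_def less_le)
  have "(\<sigma> * p1 / r)\<^sup>2 + (\<sigma> * p2 / r)\<^sup>2 = \<sigma> * \<sigma> * (p1\<^sup>2 + p2\<^sup>2) / (r * r)"
    by (simp add: power2_eq_square add_divide_distrib algebra_simps)
  also have "\<dots> = 1" using assms r by (simp add: r(2)[symmetric])
  finally have 1: "(\<sigma> * p1 / r)\<^sup>2 + (\<sigma> * p2 / r)\<^sup>2 = 1" .
  have 2: "- (\<sigma> * p2 / r) * p1 + \<sigma> * p1 / r * p2 = 0"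
    by (simp add: field_simps)
  have "\<sigma> * p1 / r * p1 + \<sigma> * p2 / r * p2 = \<sigma> * (p1\<^sup>2 + p2\<^sup>2) / r"
    by (simp add: power2_eq_square add_divide_distrib algebra_simps)
  also have "\<dots> = \<sigma> * r" using r by (simp add: r(2)[symmetric])
  finally show ?thesis using that[OF 1 2] by (simp add: r_def)
qed

lemma exists_unit_anti_aligned:
  assumes "2 \<le> n" "rinner n x x = 1" "rinner n q x = 0"
  obtains y where "rinner n y y = 1" "rinner n x y = 0" "rinner n q y = - rnorm n q"
proof (cases "rinner n q q = 0")
  case True
  obtain y where "rinner n y y = 1" "rinner n y x = 0"
    using exists_unit_orthogonal[OF _ orthonormal_single[OF assms(2)]] assms(1) by auto
  moreover have "\<forall>i<n. q i = 0" using True rinner_self_eq_0 by blast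
  then have "rinner n q y = 0" by (simp add: rinner_def)
  ultimately show ?thesis using that True by (simp add: rnorm_def rinner_commute[of n x y])
next
  case False
  define y where "y = (\<lambda>i. q i / (- rnorm n q))"
  have "rnorm n q \<noteq> 0" using False rnorm_power2[of n q] by auto
  then have "rinner n y y = 1" "rinner n q y = - rnorm n q"
    unfolding y_def rinner_divide_left rinner_divide_right rnorm_power2[symmetric]
    by (simp_all add: power2_eq_square)
  moreover have "rinner n x y = 0"
    unfolding y_def rinner_divide_right using assms(3) by (simp add: rinner_commute[of n x q])
  ultimately show ?thesis using that by blast
qed

text \<open>The rotated frame x' = c e1 + s e2, x = - s e1 + c e2 is chosen with P orthogonal to x
  and rinner n P x' = - sgn a * r, so that q = P - a x' has length L and is orthogonal to x.\<close>

lemma exists_rotated_frame_attaining: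
  assumes "2 \<le> n" and e: "rinner n e1 e1 = 1" "rinner n e2 e2 = 1" "rinner n e1 e2 = 0"
  obtains c s y where "c\<^sup>2 + s\<^sup>2 = 1" "rinner n y y = 1" "rinner n (\<lambda>i. - s * e1 i + c * e2 i) y = 0"
    "rinner n P y - a * rinner n (\<lambda>i. c * e1 i + s * e2 i) y
      = - sqrt (rinner n P P + a\<^sup>2 + 2 * \<bar>a\<bar> * sqrt ((rinner n P e1)\<^sup>2 + (rinner n P e2)\<^sup>2))"
proof -
  define r where "r = sqrt ((rinner n P e1)\<^sup>2 + (rinner n P e2)\<^sup>2)"
  define \<sigma> :: real where "\<sigma> = (if 0 \<le> a then -1 else 1)"
  have "\<sigma> * \<sigma> = 1" by (simp add: \<sigma>_def)
  then obtain c s where cs: "c\<^sup>2 + s\<^sup>2 = 1" "- s * rinner n P e1 + c * rinner n P e2 = 0"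
    "c * rinner n P e1 + s * rinner n P e2 = \<sigma> * r"
    unfolding r_def by (rule exists_rotation_aligned)
  define x' where "x' = (\<lambda>i. c * e1 i + s * e2 i)"
  define x where "x = (\<lambda>i. - s * e1 i + c * e2 i)"
  define q where "q = (\<lambda>i. P i - a * x' i)"
  have x: "rinner n x x = 1" and x'x': "rinner n x' x' = 1" and x'x: "rinner n x' x = 0"
    using cs(1) unfolding x'_def x_def rinner_frame[OF e] by (simp_all add: power2_eq_square)
  have Px: "rinner n P x = 0" and Px': "rinner n P x' = \<sigma> * r"
    using cs(2,3) unfolding x_def x'_def rinner_lincomb_right by simp_all
  have q: "rinner n q w = rinner n P w - a * rinner n x' w" for w
    by (simp add: q_def rinner_diff_left rinner_scale_left)
  have "rinner n q q = rinner n P q - a * rinner n x' q" by (rule q)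
  also have "rinner n P q = rinner n P P - a * (\<sigma> * r)"
    using q[of P] Px' by (simp add: rinner_commute[of n P q] rinner_commute[of n x' P])
  also have "rinner n x' q = \<sigma> * r - a"
    using q[of x'] Px' x'x' by (simp add: rinner_commute[of n x' q] rinner_commute[of n x' P])
  finally have "rinner n q q = rinner n P P + a\<^sup>2 - 2 * (\<sigma> * a) * r"
    by (simp add: power2_eq_square algebra_simps)
  moreover have "\<sigma> * a = - \<bar>a\<bar>" by (simp add: \<sigma>_def)
  ultimately have "rinner n q q = rinner n P P + a\<^sup>2 + 2 * \<bar>a\<bar> * r"
    by simp
  moreover obtain y where "rinner n y y = 1" "rinner n x y = 0" "rinner n q y = - rnorm n q"
    using exists_unit_anti_aligned[OF assms(1) x, of q] q[of x] Px x'x by auto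
  ultimately show ?thesis
    using that[OF cs(1)] q[of y] by (simp add: x_def x'_def rnorm_def r_def)
qed

lemma sum_upper_triangle:
  fixes B :: "nat \<Rightarrow> nat \<Rightarrow> real"
  assumes "\<And>i j. i < N \<Longrightarrow> j < N \<Longrightarrow> B i j = B j i" and "\<And>i. i < N \<Longrightarrow> B i i = 0"
  shows "2 * (\<Sum>i<N. \<Sum>j\<in>{i<..<N}. B i j) = (\<Sum>i<N. \<Sum>j<N. B i j)"
  using assms
proof (induction N)
  case 0
  then show ?case by simp
next
  case (Suc k)
  have "(\<Sum>i<Suc k. \<Sum>j\<in>{i<..<Suc k}. B i j) = (\<Sum>i<k. (\<Sum>j\<in>{i<..<k}. B i j) + B i k)"
  proof -
    have "{i<..<Suc k} = insert k {i<..<k}" if "i < k" for i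
      using that by auto
    moreover have "{k<..<Suc k} = {}" by auto
    ultimately show ?thesis by (simp add: add.commute)
  qed
  moreover have "(\<Sum>i<Suc k. \<Sum>j<Suc k. B i j)
      = (\<Sum>i<k. \<Sum>j<k. B i j) + (\<Sum>i<k. B i k) + (\<Sum>j<k. B k j) + B k k"
    by (simp add: sum.distrib)
  moreover have "(\<Sum>j<k. B k j) = (\<Sum>i<k. B i k)" "B k k = 0"
    using Suc.prems by auto
  moreover have "2 * (\<Sum>i<k. \<Sum>j\<in>{i<..<k}. B i j) = (\<Sum>i<k. \<Sum>j<k. B i j)"
    using Suc by simp
  ultimately show ?case by (simp add: sum.distrib)
qed

lemma pair2_antisym_eq:
  fixes A w :: "nat \<Rightarrow> nat \<Rightarrow> real"
  assumes A: "\<And>i j. i < n \<Longrightarrow> j < n \<Longrightarrow> A i j = - A j i"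
    and w: "\<And>i j. i < n \<Longrightarrow> j < n \<Longrightarrow> i \<noteq> j \<Longrightarrow> w i j = - w j i"
  shows "2 * pair2 n A w = (\<Sum>i<n. \<Sum>j<n. A i j * w i j)"
  unfolding pair2_def
proof (rule sum_upper_triangle)
  fix i j assume ij: "i < n" "j < n"
  show "A i j * w i j = A j i * w j i"
  proof (cases "i = j")
    case False
    then show ?thesis using A[OF ij] w[OF ij] by simp
  qed simp
next
  fix i assume "i < n"
  then show "A i i * w i i = 0" using A[of i i] by simp
qed

lemma pair2_zero: "(\<forall>i<n. \<forall>j<n. A i j = 0) \<Longrightarrow> pair2 n A w = 0"
  unfolding pair2_def by (intro sum.neutral ballI) auto

section \<open>Truncated spinors and matrix actions\<close>

text \<open>Entries of index at least m are junk: matrix actions produce them but no inner product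
  sees them. Truncating them away makes Clifford identities such as e e u = -u hold literally
  on the space trunc_space m.\<close>

definition trunc :: "nat \<Rightarrow> cvec \<Rightarrow> cvec" where
  "trunc m f = (\<lambda>k. if k < m then f k else 0)"

definition trunc_spinor :: "nat \<Rightarrow> spinor2 \<Rightarrow> spinor2" where
  "trunc_spinor m u = (trunc m (fst u), trunc m (snd u))"

definition trunc_space :: "nat \<Rightarrow> spinor2 set" where
  "trunc_space m = {u. \<forall>k. m \<le> k \<longrightarrow> fst u k = 0 \<and> snd u k = 0}"

definition mat_mult :: "nat \<Rightarrow> cmat \<Rightarrow> cmat \<Rightarrow> cmat" where
  "mat_mult m M N = (\<lambda>k l. \<Sum>p<m. M k p * N p l)"

text \<open>odd_act is the action of a vector as in dvec, even_act that of a product of two vectors.\<close>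

definition odd_act :: "nat \<Rightarrow> cmat \<Rightarrow> spinor2 \<Rightarrow> spinor2" where
  "odd_act m M u = (trunc m (mact m M (fst u)), trunc m (\<lambda>k. - mact m M (snd u) k))"

definition even_act :: "nat \<Rightarrow> cmat \<Rightarrow> spinor2 \<Rightarrow> spinor2" where
  "even_act m M u = (trunc m (mact m M (fst u)), trunc m (mact m M (snd u)))"

lemma mact_trunc: "mact m M (trunc m f) = mact m M f"
  by (simp add: mact_def trunc_def)

lemma dinner_trunc_spinor_left: "dinner m (trunc_spinor m u) w = dinner m u w"
  by (simp add: dinner_def cinner_def trunc_spinor_def trunc_def)

lemma dinner_trunc_spinor_right: "dinner m w (trunc_spinor m u) = dinner m w u"
  by (simp add: dinner_def cinner_def trunc_spinor_def trunc_def)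

lemma trunc_spinor_id: "u \<in> trunc_space m \<Longrightarrow> trunc_spinor m u = u"
  by (cases u) (auto simp: trunc_spinor_def trunc_space_def trunc_def fun_eq_iff)

lemma odd_act_in_trunc_space: "odd_act m M u \<in> trunc_space m"
  by (simp add: odd_act_def trunc_space_def trunc_def)

lemma de0_in_trunc_space: "u \<in> trunc_space m \<Longrightarrow> de0 u \<in> trunc_space m"
  by (simp add: de0_def trunc_space_def)

lemma dscale_in_trunc_space: "u \<in> trunc_space m \<Longrightarrow> dscale c u \<in> trunc_space m"
  by (simp add: dscale_def trunc_space_def)

lemma add_in_trunc_space: "u \<in> trunc_space m \<Longrightarrow> w \<in> trunc_space m \<Longrightarrow> u + w \<in> trunc_space m"
  by (simp add: trunc_space_def)

lemma Re_dinner_self_pos: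
  assumes "w \<in> trunc_space m" "w \<noteq> 0"
  shows "0 < Re (dinner m w w)"
proof -
  obtain k where k: "fst w k \<noteq> 0 \<or> snd w k \<noteq> 0"
    using assms(2) by (cases w) (auto simp: fun_eq_iff zero_prod_def)
  then have "k < m" using assms(1) by (auto simp: trunc_space_def not_le[symmetric])
  then have "(cmod (fst w k))\<^sup>2 \<le> (\<Sum>k<m. (cmod (fst w k))\<^sup>2)"
    "(cmod (snd w k))\<^sup>2 \<le> (\<Sum>k<m. (cmod (snd w k))\<^sup>2)"
    by (intro member_le_sum; simp)+
  moreover have "0 < (cmod (fst w k))\<^sup>2 + (cmod (snd w k))\<^sup>2"
    using k by (auto simp: add_pos_nonneg add_nonneg_pos)
  ultimately show ?thesis unfolding Re_dinner_self_eq by linarith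
qed

lemma Nsp_dscale_of_real: "Nsp m (dscale (complex_of_real r) u) = r\<^sup>2 * Nsp m u"
  by (simp add: Nsp_def dinner_scale_left dinner_scale_right power2_eq_square)

lemma Nsp_normalize:
  assumes "w \<in> trunc_space m" "w \<noteq> 0"
  shows "Nsp m (dscale (complex_of_real (1 / sqrt (Nsp m w))) w) = 1"
proof -
  have "0 < Nsp m w" unfolding Nsp_def using assms by (rule Re_dinner_self_pos)
  then show ?thesis by (simp only: Nsp_dscale_of_real) (simp add: power_divide)
qed

lemma odd_act_add: "odd_act m M (u + w) = odd_act m M u + odd_act m M w"
  by (simp add: odd_act_def mact_def trunc_def fun_eq_iff distrib_left sum.distrib)

lemma odd_act_diff: "odd_act m M (u - w) = odd_act m M u - odd_act m M w"
  by (simp add: odd_act_def mact_def trunc_def fun_eq_iff right_diff_distrib sum_subtractf)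

lemma odd_act_minus: "odd_act m M (- u) = - odd_act m M u"
  by (simp add: odd_act_def mact_def trunc_def fun_eq_iff sum_negf)

lemma odd_act_dscale: "odd_act m M (dscale c u) = dscale c (odd_act m M u)"
  by (simp add: odd_act_def mact_def trunc_def fun_eq_iff dscale_def sum_distrib_left mult_ac)

lemma odd_act_de0: "odd_act m M (de0 u) = - de0 (odd_act m M u)"
  by (simp add: odd_act_def de0_def trunc_def fun_eq_iff)

lemma odd_act_lincomb:
  "odd_act m (\<lambda>k l. c * M k l + N k l) w = dscale c (odd_act m M w) + odd_act m N w"
  by (simp add: odd_act_def mact_def trunc_def dscale_def fun_eq_iff distrib_left distrib_right
      sum.distrib sum_distrib_left mult.assoc)

lemma odd_act_zero_mat: "odd_act m (\<lambda>k l. 0) w = 0"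
  by (simp add: odd_act_def mact_def trunc_def fun_eq_iff prod_eq_iff)

lemma even_act_lincomb:
  "even_act m (\<lambda>k l. c * M k l + N k l) w = dscale c (even_act m M w) + even_act m N w"
  by (simp add: even_act_def mact_def trunc_def dscale_def fun_eq_iff distrib_left distrib_right
      sum.distrib sum_distrib_left mult.assoc)

lemma even_act_zero_mat: "even_act m (\<lambda>k l. 0) w = 0"
  by (simp add: even_act_def mact_def trunc_def fun_eq_iff prod_eq_iff)

lemma even_act_add_mat: "even_act m M u + even_act m N u = even_act m (\<lambda>k l. M k l + N k l) u"
  by (simp add: even_act_def mact_def trunc_def fun_eq_iff distrib_right sum.distrib)

lemma odd_act_odd_act: "odd_act m M (odd_act m N u) = even_act m (mat_mult m M N) u"
proof -
  have mult: "mact m M (trunc m (mact m N f)) = mact m (mat_mult m M N) f" for f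
  proof
    fix k
    have "mact m M (trunc m (mact m N f)) k = (\<Sum>l<m. \<Sum>p<m. M k l * (N l p * f p))"
      by (simp add: mact_def trunc_def sum_distrib_left)
    also have "\<dots> = (\<Sum>p<m. \<Sum>l<m. M k l * (N l p * f p))"
      by (rule sum.swap)
    also have "\<dots> = mact m (mat_mult m M N) f k"
      by (simp add: mact_def mat_mult_def sum_distrib_right mult.assoc)
    finally show "mact m M (trunc m (mact m N f)) k = mact m (mat_mult m M N) f k" .
  qed
  have neg: "mact m M (trunc m (\<lambda>k. - mact m N f k)) = (\<lambda>k. - mact m (mat_mult m M N) f k)" for f
  proof -
    have "trunc m (\<lambda>k. - mact m N f k) = - trunc m (mact m N f)"
      by (simp add: trunc_def fun_eq_iff)
    moreover have "mact m M (- g) = - mact m M g" for g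
      by (simp add: mact_def fun_eq_iff sum_negf)
    ultimately have "mact m M (trunc m (\<lambda>k. - mact m N f k)) = - mact m (mat_mult m M N) f"
      using mult by simp
    then show ?thesis by (simp add: fun_eq_iff)
  qed
  show ?thesis by (simp add: odd_act_def even_act_def mult neg)
qed

lemma even_act_scalar_mat:
  assumes "\<forall>k<m. \<forall>l<m. M k l = (if k = l then c else 0)"
  shows "even_act m M u = dscale c (trunc_spinor m u)"
proof -
  have "mact m M f k = c * f k" if "k < m" for f k
  proof -
    have "mact m M f k = (\<Sum>l<m. if k = l then c * f l else 0)"
      unfolding mact_def using assms that by (intro sum.cong) auto
    then show ?thesis using that by simp
  qed
  then show ?thesis by (simp add: even_act_def dscale_def trunc_spinor_def trunc_def fun_eq_iff)
qed

lemma dinner_odd_act_skew: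
  assumes "\<forall>k<m. \<forall>l<m. M k l = - cnj (M l k)"
  shows "dinner m (odd_act m M u) w = - dinner m u (odd_act m M w)"
proof -
  have skew: "cinner m (mact m M f) g = - cinner m f (mact m M g)" for f g
  proof -
    have "cinner m (mact m M f) g = (\<Sum>k<m. \<Sum>l<m. M k l * f l * cnj (g k))"
      by (simp add: cinner_def mact_def sum_distrib_right)
    also have "\<dots> = (\<Sum>l<m. \<Sum>k<m. M k l * f l * cnj (g k))"
      by (rule sum.swap)
    also have "\<dots> = (\<Sum>l<m. \<Sum>k<m. - (f l * (cnj (M l k) * cnj (g k))))"
    proof (intro sum.cong refl)
      fix l k assume "l \<in> {..<m}" "k \<in> {..<m}"
      then have "M k l = - cnj (M l k)" using assms by blast
      then show "M k l * f l * cnj (g k) = - (f l * (cnj (M l k) * cnj (g k)))" by simp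
    qed
    also have "\<dots> = - cinner m f (mact m M g)"
      by (simp add: cinner_def mact_def sum_distrib_left sum_negf)
    finally show ?thesis .
  qed
  have "cinner m (trunc m f) g = cinner m f g" "cinner m g (trunc m f) = cinner m g f"
    "cinner m (\<lambda>k. - f k) g = - cinner m f g" "cinner m g (\<lambda>k. - f k) = - cinner m g f" for f g
    by (simp_all add: cinner_def trunc_def sum_negf)
  then show ?thesis by (simp add: dinner_def odd_act_def skew)
qed

lemma dinner_odd_act_sum:
  assumes "finite I"
  shows "dinner m (odd_act m (\<lambda>k l. \<Sum>i\<in>I. c i * M i k l) w) u
    = (\<Sum>i\<in>I. c i * dinner m (odd_act m (M i) w) u)"
  using assms
proof (induction I rule: finite_induct)
  case empty
  then show ?case by (simp add: odd_act_zero_mat dinner_zero_left)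
next
  case (insert x F)
  have "odd_act m (\<lambda>k l. \<Sum>i\<in>insert x F. c i * M i k l) w
    = odd_act m (\<lambda>k l. c x * M x k l + (\<Sum>i\<in>F. c i * M i k l)) w"
    using insert by simp
  also have "\<dots> = dscale (c x) (odd_act m (M x) w) + odd_act m (\<lambda>k l. \<Sum>i\<in>F. c i * M i k l) w"
    by (rule odd_act_lincomb)
  finally show ?case using insert by (simp add: dinner_add_left dinner_scale_left)
qed

lemma dinner_even_act_sum:
  assumes "finite I"
  shows "dinner m (even_act m (\<lambda>k l. \<Sum>i\<in>I. c i * M i k l) w) u
    = (\<Sum>i\<in>I. c i * dinner m (even_act m (M i) w) u)"
  using assms
proof (induction I rule: finite_induct)
  case empty
  then show ?case by (simp add: even_act_zero_mat dinner_zero_left)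
next
  case (insert x F)
  have "even_act m (\<lambda>k l. \<Sum>i\<in>insert x F. c i * M i k l) w
    = even_act m (\<lambda>k l. c x * M x k l + (\<Sum>i\<in>F. c i * M i k l)) w"
    using insert by simp
  also have "\<dots> = dscale (c x) (even_act m (M x) w) + even_act m (\<lambda>k l. \<Sum>i\<in>F. c i * M i k l) w"
    by (rule even_act_lincomb)
  finally show ?case using insert by (simp add: dinner_add_left dinner_scale_left)
qed

lemma dinner_dvec: "dinner m (dvec m E i w) u = dinner m (odd_act m (E i) w) u"
  by (simp add: dinner_def cinner_def dvec_def odd_act_def trunc_def)

lemma odd_act_dvec: "odd_act m M (dvec m E j w) = odd_act m M (odd_act m (E j) w)"
  by (simp add: odd_act_def dvec_def mact_def trunc_def)

lemma sum_product_double: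
  fixes a b :: "nat \<Rightarrow> complex"
  shows "(\<Sum>p\<in>P. (\<Sum>i\<in>I. a i * F i p) * (\<Sum>j\<in>J. b j * G j p))
    = (\<Sum>i\<in>I. \<Sum>j\<in>J. a i * b j * (\<Sum>p\<in>P. F i p * G j p))"
proof -
  have "(\<Sum>p\<in>P. (\<Sum>i\<in>I. a i * F i p) * (\<Sum>j\<in>J. b j * G j p))
    = (\<Sum>p\<in>P. \<Sum>i\<in>I. \<Sum>j\<in>J. a i * b j * (F i p * G j p))"
    by (simp add: sum_product mult_ac)
  also have "\<dots> = (\<Sum>i\<in>I. \<Sum>p\<in>P. \<Sum>j\<in>J. a i * b j * (F i p * G j p))"
    by (rule sum.swap)
  also have "\<dots> = (\<Sum>i\<in>I. \<Sum>j\<in>J. \<Sum>p\<in>P. a i * b j * (F i p * G j p))"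
    by (intro sum.cong refl sum.swap)
  finally show ?thesis by (simp add: sum_distrib_left)
qed

section \<open>Clifford multiplication\<close>

locale spinor_module =
  fixes n m :: nat and E :: "nat \<Rightarrow> cmat"
  assumes spinor_module: "is_spinor_module n m E"
begin

lemma m_pos: "0 < m"
proof -
  have "m = 2 ^ (n div 2)" using spinor_module unfolding is_spinor_module_def by blast
  then show ?thesis by simp
qed

lemma E_skew: "i < n \<Longrightarrow> k < m \<Longrightarrow> l < m \<Longrightarrow> E i k l = - cnj (E i l k)"
  using spinor_module unfolding is_spinor_module_def by blast

lemma E_anticomm: "i < n \<Longrightarrow> j < n \<Longrightarrow> k < m \<Longrightarrow> l < m \<Longrightarrow>
    mat_mult m (E i) (E j) k l + mat_mult m (E j) (E i) k l = (if i = j \<and> k = l then -2 else 0)"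
proof -
  assume "i < n" "j < n" "k < m" "l < m"
  moreover have "\<forall>i<n. \<forall>j<n. \<forall>k<m. \<forall>l<m.
      (\<Sum>p<m. E i k p * E j p l + E j k p * E i p l) = (if i = j \<and> k = l then -2 else 0)"
    using spinor_module unfolding is_spinor_module_def by blast
  ultimately show ?thesis unfolding mat_mult_def by (simp add: sum.distrib)
qed

definition clifford_mat :: "(nat \<Rightarrow> real) \<Rightarrow> cmat" where
  "clifford_mat x = (\<lambda>k l. \<Sum>i<n. complex_of_real (x i) * E i k l)"

definition cmul :: "(nat \<Rightarrow> real) \<Rightarrow> spinor2 \<Rightarrow> spinor2" where
  "cmul x = odd_act m (clifford_mat x)"

lemma clifford_mat_skew: "\<forall>k<m. \<forall>l<m. clifford_mat x k l = - cnj (clifford_mat x l k)"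
proof (intro allI impI)
  fix k l assume "k < m" "l < m"
  then have "clifford_mat x k l = (\<Sum>i<n. - (complex_of_real (x i) * cnj (E i l k)))"
    unfolding clifford_mat_def by (intro sum.cong refl) (metis E_skew lessThan_iff mult_minus_right)
  then show "clifford_mat x k l = - cnj (clifford_mat x l k)"
    by (simp add: clifford_mat_def sum_negf)
qed

lemma clifford_mat_anticomm:
  assumes "k < m" "l < m"
  shows "mat_mult m (clifford_mat x) (clifford_mat y) k l + mat_mult m (clifford_mat y) (clifford_mat x) k l
    = (if k = l then - 2 * complex_of_real (rinner n x y) else 0)"
proof -
  let ?xy = "\<lambda>i j. complex_of_real (x i) * complex_of_real (y j)"
  have "mat_mult m (clifford_mat x) (clifford_mat y) k l + mat_mult m (clifford_mat y) (clifford_mat x) k l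
    = (\<Sum>i<n. \<Sum>j<n. ?xy i j * mat_mult m (E i) (E j) k l)
      + (\<Sum>j<n. \<Sum>i<n. complex_of_real (y j) * complex_of_real (x i) * mat_mult m (E j) (E i) k l)"
    unfolding mat_mult_def clifford_mat_def by (simp only: sum_product_double)
  also have "(\<Sum>j<n. \<Sum>i<n. complex_of_real (y j) * complex_of_real (x i) * mat_mult m (E j) (E i) k l)
    = (\<Sum>i<n. \<Sum>j<n. ?xy i j * mat_mult m (E j) (E i) k l)"
    by (subst sum.swap) (simp add: mult_ac)
  also have "(\<Sum>i<n. \<Sum>j<n. ?xy i j * mat_mult m (E i) (E j) k l) + \<dots>
    = (\<Sum>i<n. \<Sum>j<n. ?xy i j * (mat_mult m (E i) (E j) k l + mat_mult m (E j) (E i) k l))"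
    by (simp add: sum.distrib distrib_left)
  also have "\<dots> = (\<Sum>i<n. \<Sum>j<n. ?xy i j * (if i = j \<and> k = l then -2 else 0))"
    using assms by (intro sum.cong refl) (simp add: E_anticomm)
  also have "\<dots> = (if k = l then - 2 * complex_of_real (rinner n x y) else 0)"
    by (auto simp: if_distrib sum.delta rinner_def sum_distrib_left mult_ac cong: if_cong)
  finally show ?thesis .
qed

lemma cmul_anticomm:
  "cmul x (cmul y u) + cmul y (cmul x u) = dscale (- 2 * complex_of_real (rinner n x y)) (trunc_spinor m u)"
  unfolding cmul_def odd_act_odd_act even_act_add_mat
  by (rule even_act_scalar_mat) (simp add: clifford_mat_anticomm)

lemma cmul_anticomm_orthogonal: "rinner n x y = 0 \<Longrightarrow> cmul x (cmul y u) = - cmul y (cmul x u)"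
  using cmul_anticomm[of x y u] by (simp add: eq_neg_iff_add_eq_0)

lemma cmul_swap:
  "cmul y (cmul x u) = - cmul x (cmul y u) - dscale (2 * complex_of_real (rinner n x y)) (trunc_spinor m u)"
  using cmul_anticomm[of x y u]
  by (simp add: eq_diff_eq eq_neg_iff_add_eq_0 dscale_minus_left algebra_simps)

lemma cmul_cmul_self: "cmul x (cmul x u) = dscale (- complex_of_real (rinner n x x)) (trunc_spinor m u)"
  using cmul_anticomm[of x x u] by (simp add: dscale_def fun_eq_iff prod_eq_iff mult_ac)

lemma cmul_in_trunc_space: "cmul x u \<in> trunc_space m"
  unfolding cmul_def by (rule odd_act_in_trunc_space)

lemma cmul_add: "cmul x (u + w) = cmul x u + cmul x w"
  unfolding cmul_def by (rule odd_act_add)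

lemma cmul_diff: "cmul x (u - w) = cmul x u - cmul x w"
  unfolding cmul_def by (rule odd_act_diff)

lemma cmul_minus: "cmul x (- u) = - cmul x u"
  unfolding cmul_def by (rule odd_act_minus)

lemma cmul_dscale: "cmul x (dscale c u) = dscale c (cmul x u)"
  unfolding cmul_def by (rule odd_act_dscale)

lemma cmul_de0: "cmul x (de0 u) = - de0 (cmul x u)"
  unfolding cmul_def by (rule odd_act_de0)

lemma cmul_trunc_spinor: "cmul x (trunc_spinor m u) = cmul x u"
  by (simp add: cmul_def odd_act_def trunc_spinor_def mact_trunc)

lemma cmul_lincomb:
  "cmul (\<lambda>i. a * x i + b * y i) u = dscale (complex_of_real a) (cmul x u) + dscale (complex_of_real b) (cmul y u)"
proof -
  have "clifford_mat (\<lambda>i. a * x i + b * y i)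
    = (\<lambda>k l. complex_of_real a * clifford_mat x k l + (complex_of_real b * clifford_mat y k l + 0))"
    by (simp add: clifford_mat_def fun_eq_iff sum.distrib sum_distrib_left distrib_right mult.assoc)
  then show ?thesis
    unfolding cmul_def by (simp only: odd_act_lincomb odd_act_zero_mat) simp
qed

lemma dinner_cmul_left: "dinner m (cmul x u) w = - dinner m u (cmul x w)"
  unfolding cmul_def by (rule dinner_odd_act_skew[OF clifford_mat_skew])

lemma dinner_cmul_right: "dinner m u (cmul x w) = - dinner m (cmul x u) w"
  by (simp add: dinner_cmul_left)

lemma dinner_cmul_cmul_self: "dinner m (cmul x u) (cmul x u) = complex_of_real (rinner n x x) * dinner m u u"
  by (simp add: dinner_cmul_left cmul_cmul_self dinner_scale_right dinner_trunc_spinor_right)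

lemma dinner_cmul_cmul_add_swap:
  "dinner m (cmul x (cmul y w)) w + dinner m w (cmul x (cmul y w))
    = - 2 * complex_of_real (rinner n x y) * dinner m w w"
proof -
  have "dinner m w (cmul x (cmul y w)) = dinner m (cmul y (cmul x w)) w"
    by (simp add: dinner_cmul_right)
  then have "dinner m (cmul x (cmul y w)) w + dinner m w (cmul x (cmul y w))
      = dinner m (cmul x (cmul y w) + cmul y (cmul x w)) w"
    by (simp add: dinner_add_left)
  then show ?thesis
    by (simp add: cmul_anticomm dinner_scale_left dinner_trunc_spinor_left)
qed

lemma dinner_cmul_expand: "dinner m (cmul x w) u = (\<Sum>i<n. complex_of_real (x i) * dinner m (dvec m E i w) u)"
  unfolding cmul_def clifford_mat_def dinner_dvec by (rule dinner_odd_act_sum) simp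

lemma dinner_cmul_cmul_expand:
  "dinner m (cmul x (cmul y w)) u = (\<Sum>i<n. \<Sum>j<n. complex_of_real (x i) * complex_of_real (y j) *
      dinner m (dvec m E i (dvec m E j w)) u)"
proof -
  have "mat_mult m (clifford_mat x) (clifford_mat y) = (\<lambda>k l. \<Sum>i<n. complex_of_real (x i) *
           (\<Sum>j<n. complex_of_real (y j) * mat_mult m (E i) (E j) k l))"
    unfolding mat_mult_def clifford_mat_def
    by (simp only: sum_product_double) (simp add: fun_eq_iff sum_distrib_left mult_ac)
  then have "dinner m (cmul x (cmul y w)) u = (\<Sum>i<n. complex_of_real (x i) *
      dinner m (even_act m (\<lambda>k l. \<Sum>j<n. complex_of_real (y j) * mat_mult m (E i) (E j) k l) w) u)"
    unfolding cmul_def odd_act_odd_act by (simp add: dinner_even_act_sum)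
  also have "\<dots> = (\<Sum>i<n. complex_of_real (x i) * (\<Sum>j<n. complex_of_real (y j) *
      dinner m (even_act m (mat_mult m (E i) (E j)) w) u))"
    by (simp add: dinner_even_act_sum)
  finally show ?thesis
    by (simp add: dinner_dvec odd_act_dvec odd_act_odd_act sum_distrib_left mult_ac)
qed

lemma dinner_dvec_dvec_anticomm:
  assumes "i < n" "j < n" "i \<noteq> j"
  shows "dinner m (dvec m E i (dvec m E j w)) u = - dinner m (dvec m E j (dvec m E i w)) u"
proof -
  have "even_act m (mat_mult m (E i) (E j)) w + even_act m (mat_mult m (E j) (E i)) w = dscale 0 (trunc_spinor m w)"
    unfolding even_act_add_mat by (rule even_act_scalar_mat) (simp add: assms E_anticomm)
  then have "dinner m (even_act m (mat_mult m (E i) (E j)) w) u + dinner m (even_act m (mat_mult m (E j) (E i)) w) u = 0"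
    by (metis dinner_add_left dinner_zero_left dscale_zero)
  then show ?thesis
    by (simp add: dinner_dvec odd_act_dvec odd_act_odd_act eq_neg_iff_add_eq_0)
qed

lemma omega_antisym: "i < n \<Longrightarrow> j < n \<Longrightarrow> i \<noteq> j \<Longrightarrow> omega m E u i j = - omega m E u j i"
  using dinner_dvec_dvec_anticomm[of i j "de0 u" u] by (simp add: omega_def)

lemma pair2_omega_simple:
  assumes A: "\<forall>i<n. \<forall>j<n. A i j = a * (e1 i * e2 j - e1 j * e2 i)" and "rinner n e1 e2 = 0"
  shows "pair2 n A (omega m E u) = a * Im (dinner m (cmul e1 (cmul e2 (de0 u))) u)"
proof -
  let ?w = "omega m E u"
  have A_ij: "A i j = a * (e1 i * e2 j - e1 j * e2 i)" if "i \<in> {..<n}" "j \<in> {..<n}" for i j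
    using A that by blast
  have "A i j = - A j i" if "i < n" "j < n" for i j
    using A_ij[of i j] A_ij[of j i] that by (simp add: algebra_simps)
  then have "2 * pair2 n A ?w = (\<Sum>i<n. \<Sum>j<n. A i j * ?w i j)"
    using omega_antisym by (rule pair2_antisym_eq)
  also have "\<dots> = (\<Sum>i<n. \<Sum>j<n. a * (e1 i * e2 j * ?w i j) - a * (e2 i * e1 j * ?w i j))"
    by (intro sum.cong refl) (simp add: A_ij algebra_simps)
  also have "\<dots> = a * (\<Sum>i<n. \<Sum>j<n. e1 i * e2 j * ?w i j) - a * (\<Sum>i<n. \<Sum>j<n. e2 i * e1 j * ?w i j)"
    by (simp add: sum_subtractf sum_distrib_left)
  also have "(\<Sum>i<n. \<Sum>j<n. e1 i * e2 j * ?w i j) = Im (dinner m (cmul e1 (cmul e2 (de0 u))) u)"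
    by (simp add: dinner_cmul_cmul_expand omega_def Im_sum)
  also have "(\<Sum>i<n. \<Sum>j<n. e2 i * e1 j * ?w i j) = Im (dinner m (cmul e2 (cmul e1 (de0 u))) u)"
    by (simp add: dinner_cmul_cmul_expand omega_def Im_sum)
  also have "cmul e2 (cmul e1 (de0 u)) = - cmul e1 (cmul e2 (de0 u))"
    using cmul_anticomm_orthogonal[of e2 e1] assms(2) by (simp add: rinner_commute)
  finally show ?thesis by (simp add: dinner_minus_left)
qed

text \<open>Commuting a vector x through the plane element e1 e2 leaves the component of x in the
  plane, rotated by a right angle.\<close>

lemma cmul_plane_anticomm:
  assumes "rinner n e1 e2 = 0"
  shows "cmul e2 (cmul e1 (cmul x u)) + cmul x (cmul e1 (cmul e2 u))
    = dscale 2 (cmul (\<lambda>i. rinner n x e2 * e1 i + (- rinner n x e1) * e2 i) u)"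
proof -
  have "cmul e2 (cmul e1 (cmul x u)) = - cmul e2 (cmul x (cmul e1 u))
      - dscale (2 * complex_of_real (rinner n x e1)) (cmul e2 u)"
    by (simp add: cmul_swap[of e1 x] cmul_diff cmul_minus cmul_dscale cmul_trunc_spinor rinner_commute)
  also have "cmul e2 (cmul x (cmul e1 u)) = - cmul x (cmul e2 (cmul e1 u))
      - dscale (2 * complex_of_real (rinner n x e2)) (cmul e1 u)"
    by (simp add: cmul_swap[of x e2] trunc_spinor_id cmul_in_trunc_space rinner_commute[of n e2 x])
  also have "cmul e2 (cmul e1 u) = - cmul e1 (cmul e2 u)"
    using cmul_anticomm_orthogonal[of e2 e1 u] assms by (simp add: rinner_commute)
  finally have "cmul e2 (cmul e1 (cmul x u)) + cmul x (cmul e1 (cmul e2 u))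
      = dscale (2 * complex_of_real (rinner n x e2)) (cmul e1 u)
        - dscale (2 * complex_of_real (rinner n x e1)) (cmul e2 u)"
    by (simp add: cmul_minus)
  also have "\<dots> = dscale 2 (cmul (\<lambda>i. rinner n x e2 * e1 i + (- rinner n x e1) * e2 i) u)"
    using cmul_lincomb[of "rinner n x e2" e1 "- rinner n x e1" e2 u]
    by (simp add: dscale_add dscale_minus_left dscale_diff)
  finally show ?thesis .
qed

lemma cmul_rotate_plane:
  assumes e: "rinner n e1 e1 = 1" "rinner n e2 e2 = 1" "rinner n e1 e2 = 0" and cs: "c\<^sup>2 + s\<^sup>2 = 1"
  shows "cmul (\<lambda>i. c * e1 i + s * e2 i) (cmul (\<lambda>i. - s * e1 i + c * e2 i) w) = cmul e1 (cmul e2 w)"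
proof -
  define T where "T = cmul e1 (cmul e2 w)"
  define W where "W = trunc_spinor m w"
  have sq: "cmul e1 (cmul e1 w) = - W" "cmul e2 (cmul e2 w) = - W"
    using e by (simp_all add: cmul_cmul_self W_def dscale_minus_left)
  have swap: "cmul e2 (cmul e1 w) = - T"
    using cmul_anticomm_orthogonal[of e2 e1 w] e(3) by (simp add: T_def rinner_commute)
  have "cmul (\<lambda>i. c * e1 i + s * e2 i) (cmul (\<lambda>i. - s * e1 i + c * e2 i) w)
    = dscale (complex_of_real c) (dscale (complex_of_real (- s)) (- W) + dscale (complex_of_real c) T)
      + dscale (complex_of_real s) (dscale (complex_of_real (- s)) (- T) + dscale (complex_of_real c) (- W))"
    by (simp only: cmul_lincomb cmul_add cmul_dscale sq swap T_def[symmetric])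
  also have "\<dots> = dscale (complex_of_real (c\<^sup>2 + s\<^sup>2)) T"
    by (simp add: dscale_def prod_eq_iff fun_eq_iff power2_eq_square algebra_simps)
  finally show ?thesis by (simp add: cs T_def)
qed

end
section \<open>Spinors with prescribed X and Y\<close>

context spinor_module
begin

definition Xop :: "(nat \<Rightarrow> real) \<Rightarrow> spinor2 \<Rightarrow> spinor2" where
  "Xop x u = cmul x (de0 u)"

definition Yop :: "(nat \<Rightarrow> real) \<Rightarrow> spinor2 \<Rightarrow> spinor2" where
  "Yop y u = dscale \<i> (cmul y u)"

lemma rinner_Xsp: "rinner n x (Xsp m E u) = Re (dinner m (Xop x u) u)"
  by (simp add: rinner_def Xsp_def Xop_def dinner_cmul_expand Re_sum)

lemma rinner_Ysp: "rinner n y (Ysp m E u) = Re (dinner m (Yop y u) u)"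
  by (simp add: rinner_def Ysp_def Yop_def dinner_cmul_expand dinner_scale_left Re_sum
      sum_distrib_left mult_ac)

lemma Xop_in_trunc_space: "Xop x u \<in> trunc_space m"
  by (simp add: Xop_def cmul_in_trunc_space)

lemma Yop_in_trunc_space: "Yop y u \<in> trunc_space m"
  by (simp add: Yop_def cmul_in_trunc_space dscale_in_trunc_space)

lemma Xop_add: "Xop x (u + w) = Xop x u + Xop x w"
  by (simp add: Xop_def de0_add cmul_add)

lemma Yop_add: "Yop y (u + w) = Yop y u + Yop y w"
  by (simp add: Yop_def cmul_add dscale_add)

lemma Xop_dscale: "Xop x (dscale c u) = dscale c (Xop x u)"
  by (simp add: Xop_def de0_dscale cmul_dscale)

lemma Yop_dscale: "Yop y (dscale c u) = dscale c (Yop y u)"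
  by (simp add: Yop_def cmul_dscale mult.commute)

lemma de0_Yop: "de0 (Yop y u) = - Yop y (de0 u)"
  by (simp add: Yop_def de0_dscale cmul_de0 dscale_minus)

lemma dinner_Xop_Xop_self: "dinner m (Xop x u) (Xop x u) = complex_of_real (rinner n x x) * dinner m u u"
  by (simp add: Xop_def dinner_cmul_cmul_self dinner_de0_de0)

lemma dinner_Yop_Yop_self: "dinner m (Yop y u) (Yop y u) = complex_of_real (rinner n y y) * dinner m u u"
  by (simp add: Yop_def dinner_scale_left dinner_scale_right dinner_cmul_cmul_self)

lemma Xop_Xop_self: "u \<in> trunc_space m \<Longrightarrow> Xop x (Xop x u) = dscale (complex_of_real (rinner n x x)) u"
  by (simp add: Xop_def cmul_de0 cmul_minus cmul_cmul_self trunc_spinor_id dscale_minus_left)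

lemma Yop_Yop_self: "u \<in> trunc_space m \<Longrightarrow> Yop y (Yop y u) = dscale (complex_of_real (rinner n y y)) u"
  by (simp add: Yop_def cmul_dscale cmul_cmul_self trunc_spinor_id)

lemma Xop_anticomm_orthogonal: "rinner n x z = 0 \<Longrightarrow> Xop z (Xop x u) = - Xop x (Xop z u)"
  using cmul_anticomm_orthogonal[of z x u] by (simp add: Xop_def cmul_de0 cmul_minus rinner_commute)

lemma Xop_Yop_comm_orthogonal: "rinner n x y = 0 \<Longrightarrow> Xop x (Yop y u) = Yop y (Xop x u)"
  using cmul_anticomm_orthogonal[of y x "de0 u"]
  by (simp add: Xop_def Yop_def de0_dscale cmul_dscale cmul_de0 cmul_minus dscale_minus rinner_commute)

lemma rnorm_Xsp_le: "rnorm n (Xsp m E u) \<le> Nsp m u"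
proof (rule rnorm_le_of_rinner_self_le)
  let ?X = "Xsp m E u"
  have "\<bar>Re (dinner m (Xop ?X u) u)\<bar> \<le> rnorm n ?X * Re (dinner m u u)"
    by (rule abs_Re_dinner_le) (simp_all add: dinner_Xop_Xop_self rnorm_power2 rnorm_nonneg)
  then show "rinner n ?X ?X \<le> rnorm n ?X * Nsp m u"
    by (simp add: rinner_Xsp Nsp_def)
qed (simp add: Nsp_def Re_dinner_self_nonneg)

lemma rnorm_Ysp_le: "rnorm n (Ysp m E u) \<le> Nsp m u"
proof (rule rnorm_le_of_rinner_self_le)
  let ?Y = "Ysp m E u"
  have "\<bar>Re (dinner m (Yop ?Y u) u)\<bar> \<le> rnorm n ?Y * Re (dinner m u u)"
    by (rule abs_Re_dinner_le) (simp_all add: dinner_Yop_Yop_self rnorm_power2 rnorm_nonneg)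
  then show "rinner n ?Y ?Y \<le> rnorm n ?Y * Nsp m u"
    by (simp add: rinner_Ysp Nsp_def)
qed (simp add: Nsp_def Re_dinner_self_nonneg)

text \<open>Such a spinor attains the Cauchy-Schwarz bounds rinner n x X \<le> |X| \<le> 1 and
  rinner n y Y \<le> |Y| \<le> 1, which forces X = x and Y = y.\<close>

lemma Xsp_Ysp_of_fixed:
  assumes u: "Nsp m u = 1" "Xop x u = u" "Yop y u = u"
    and x: "rinner n x x = 1" and y: "rinner n y y = 1" and "i < n"
  shows "Xsp m E u i = x i" "Ysp m E u i = y i"
proof -
  have "rinner n x (Xsp m E u) = 1" using u by (simp add: rinner_Xsp Nsp_def)
  moreover have "rinner n (Xsp m E u) (Xsp m E u) \<le> 1"
    using rnorm_Xsp_le[of u] u(1) rnorm_power2[of n "Xsp m E u"] rnorm_nonneg[of n "Xsp m E u"]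
    by (metis power_le_one)
  ultimately show "Xsp m E u i = x i" by (rule eq_of_rinner_eq_one[OF x _ _ \<open>i < n\<close>])
  have "rinner n y (Ysp m E u) = 1" using u by (simp add: rinner_Ysp Nsp_def)
  moreover have "rinner n (Ysp m E u) (Ysp m E u) \<le> 1"
    using rnorm_Ysp_le[of u] u(1) rnorm_power2[of n "Ysp m E u"] rnorm_nonneg[of n "Ysp m E u"]
    by (metis power_le_one)
  ultimately show "Ysp m E u i = y i" by (rule eq_of_rinner_eq_one[OF y _ _ \<open>i < n\<close>])
qed

text \<open>A fixed vector of Yop y is found with the anticommuting involution de0, and inside that
  eigenspace a fixed vector of Xop x with the anticommuting involution Xop z.\<close>

lemma exists_unit_fixed_spinor:
  assumes x: "rinner n x x = 1" and y: "rinner n y y = 1" and z: "rinner n z z = 1"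
    and xy: "rinner n x y = 0" and xz: "rinner n x z = 0" and yz: "rinner n z y = 0"
  shows "\<exists>u. Nsp m u = 1 \<and> Xop x u = u \<and> Yop y u = u"
proof -
  define u0 :: spinor2 where "u0 = (\<lambda>k. if k = 0 then 1 else 0, \<lambda>k. 0)"
  have u0: "u0 \<in> trunc_space m" "u0 \<noteq> 0"
    using m_pos by (auto simp: u0_def trunc_space_def zero_prod_def fun_eq_iff)
  obtain u1 where u1: "u1 \<in> trunc_space m" "u1 \<noteq> 0" "Yop y u1 = u1"
    using exists_fixed_vector[of u0 "trunc_space m" "Yop y" de0] u0
    by (auto simp: Yop_add de0_add Yop_in_trunc_space de0_in_trunc_space add_in_trunc_space
        Yop_Yop_self y de0_Yop)
  let ?S = "{a \<in> trunc_space m. Yop y a = a}"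
  have "\<exists>w\<in>?S. w \<noteq> 0 \<and> Xop x w = w"
  proof (rule exists_fixed_vector[of u1 ?S "Xop x" "Xop z"])
    show "Xop x a \<in> ?S" "Xop z a \<in> ?S" if "a \<in> ?S" for a
      using that Xop_Yop_comm_orthogonal[OF xy, of a] Xop_Yop_comm_orthogonal[OF yz, of a]
      by (auto simp: Xop_in_trunc_space)
    show "a + b \<in> ?S" if "a \<in> ?S" "b \<in> ?S" for a b
      using that by (simp add: add_in_trunc_space Yop_add)
  qed (use u1 x z in \<open>simp_all add: Xop_add Xop_Xop_self Xop_anticomm_orthogonal[OF xz]\<close>)
  then obtain w where w: "w \<in> trunc_space m" "w \<noteq> 0" "Yop y w = w" "Xop x w = w"
    by blast
  define u where "u = dscale (complex_of_real (1 / sqrt (Nsp m w))) w"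
  have "Nsp m u = 1" unfolding u_def using w(1,2) by (rule Nsp_normalize)
  moreover have "Xop x u = u" "Yop y u = u"
    using w by (simp_all add: u_def Xop_dscale Yop_dscale)
  ultimately show ?thesis by blast
qed

lemma exists_spinor_with_Xsp_Ysp:
  assumes "3 \<le> n" and x: "rinner n x x = 1" and y: "rinner n y y = 1" and xy: "rinner n x y = 0"
  obtains u where "Nsp m u = 1" "Xop x u = u" "Yop y u = u"
    "\<And>i. i < n \<Longrightarrow> Xsp m E u i = x i" "\<And>i. i < n \<Longrightarrow> Ysp m E u i = y i"
proof -
  obtain z where z: "rinner n z z = 1" "rinner n z x = 0" "rinner n z y = 0"
    using exists_unit_orthogonal_pair[OF assms(1) x y xy] by blast
  obtain u where u: "Nsp m u = 1" "Xop x u = u" "Yop y u = u"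
    using exists_unit_fixed_spinor[OF x y z(1) xy _ z(3)] z(2) rinner_commute[of n x z] by auto
  show ?thesis by (rule that[OF u Xsp_Ysp_of_fixed[OF u x y]])
qed

end
section \<open>The minimum in the cases A = 0 and C = 0\<close>

definition has_unit_XY_minimizer ::
    "nat \<Rightarrow> nat \<Rightarrow> (nat \<Rightarrow> cmat) \<Rightarrow> (nat \<Rightarrow> real) \<Rightarrow> (nat \<Rightarrow> real) \<Rightarrow> (nat \<Rightarrow> nat \<Rightarrow> real) \<Rightarrow> bool"
  where "has_unit_XY_minimizer n m E C P A \<longleftrightarrow> (\<exists>u. spnorm m u = 1
    \<and> (\<forall>v. spnorm m v = 1 \<longrightarrow> Ffun n m E C P A u \<le> Ffun n m E C P A v)
    \<and> Nsp m u = 1 \<and> rnorm n (Xsp m E u) = 1 \<and> rnorm n (Ysp m E u) = 1)"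

lemma has_unit_XY_minimizerI:
  assumes lower: "\<And>v. - L * Nsp m v \<le> Ffun n m E C P A v"
    and u: "Ffun n m E C P A u = - L" "Nsp m u = 1" "rnorm n (Xsp m E u) = 1" "rnorm n (Ysp m E u) = 1"
  shows "has_unit_XY_minimizer n m E C P A"
  unfolding has_unit_XY_minimizer_def
proof (intro exI conjI allI impI)
  fix v assume "spnorm m v = 1"
  then have "Nsp m v = 1"
    using Re_dinner_self_nonneg[of m v] by (simp add: spnorm_def Nsp_def)
  then show "Ffun n m E C P A u \<le> Ffun n m E C P A v" using lower[of v] u(1) by simp
qed (use u in \<open>simp_all add: spnorm_def\<close>)

context spinor_module
begin

text \<open>The cross term of |Xop C v + Yop P v|^2 is governed by i (P C + (P . C)) e0, whose
  square is |C \<and> P|^2.\<close>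

lemma abs_Re_dinner_Xop_Yop_le:
  assumes D: "0 \<le> D" "D\<^sup>2 = rinner n C C * rinner n P P - (rinner n P C)\<^sup>2"
  shows "\<bar>Re (dinner m (Xop C v) (Yop P v))\<bar> \<le> D * Re (dinner m v v)"
proof -
  define w where "w = de0 v"
  define s where "s = rinner n P C"
  define G where "G = cmul P (cmul C w) + dscale (complex_of_real s) w"
  have ww: "dinner m w w = dinner m v v" by (simp add: w_def dinner_de0_de0)
  have "dinner m (Xop C v) (Yop P v) = \<i> * dinner m (cmul P (cmul C w)) v"
    by (simp add: Xop_def Yop_def w_def dinner_scale_right dinner_cmul_right)
  moreover have "Re (\<i> * (complex_of_real s * dinner m w v)) = 0"
    using Im_dinner_de0_self[of m v] by (simp add: w_def)
  ultimately have cross: "Re (dinner m (Xop C v) (Yop P v)) = Re (dinner m (dscale \<i> G) v)"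
    by (simp add: G_def dinner_scale_left dinner_add_left distrib_left)
  have "dinner m G G = dinner m (cmul P (cmul C w)) (cmul P (cmul C w))
      + complex_of_real s * (dinner m (cmul P (cmul C w)) w + dinner m w (cmul P (cmul C w)))
      + complex_of_real s * complex_of_real s * dinner m w w"
    by (simp add: G_def dinner_add_left dinner_add_right dinner_scale_left dinner_scale_right
        algebra_simps)
  also have "\<dots> = complex_of_real (rinner n C C * rinner n P P - s\<^sup>2) * dinner m w w"
    unfolding dinner_cmul_cmul_add_swap dinner_cmul_cmul_self s_def
    by (simp add: algebra_simps power2_eq_square)
  finally have "Re (dinner m (dscale \<i> G) (dscale \<i> G)) = D\<^sup>2 * Re (dinner m v v)"
    using D(2) ww by (simp add: dinner_scale_left dinner_scale_right s_def)
  then show ?thesis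
    unfolding cross by (intro abs_Re_dinner_le) (simp_all add: D(1))
qed

lemma Re_dinner_Xop_add_Yop_ge:
  assumes "0 \<le> D" "D\<^sup>2 = rinner n C C * rinner n P P - (rinner n P C)\<^sup>2"
  shows "- sqrt (rinner n C C + rinner n P P + 2 * D) * Re (dinner m v v)
    \<le> Re (dinner m (Xop C v + Yop P v) v)"
  using assms(1) rinner_self_nonneg[of n C] rinner_self_nonneg[of n P]
  by (intro Re_dinner_add_ge abs_Re_dinner_Xop_Yop_le[OF assms])
    (simp_all add: dinner_Xop_Xop_self dinner_Yop_Yop_self)

lemma has_unit_XY_minimizer_zero_form:
  assumes "3 \<le> n" and A: "\<forall>i<n. \<forall>j<n. A i j = 0"
  shows "has_unit_XY_minimizer n m E C P A"
proof -
  have F: "Ffun n m E C P A v = Re (dinner m (Xop C v + Yop P v) v)" for v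
    by (simp add: Ffun_def pair2_zero[OF A] rinner_Xsp rinner_Ysp dinner_add_left)
  obtain D x y where D: "0 \<le> D" "D\<^sup>2 = rinner n C C * rinner n P P - (rinner n P C)\<^sup>2"
    and x: "rinner n x x = 1" and y: "rinner n y y = 1" and xy: "rinner n x y = 0"
    and val: "rinner n C x + rinner n P y = - sqrt (rinner n C C + rinner n P P + 2 * D)"
    using exists_orthonormal_pair_attaining[of n C P] assms(1) by auto
  obtain u where u: "Nsp m u = 1" "\<And>i. i < n \<Longrightarrow> Xsp m E u i = x i" "\<And>i. i < n \<Longrightarrow> Ysp m E u i = y i"
    by (rule exists_spinor_with_Xsp_Ysp[OF assms(1) x y xy]) blast
  show ?thesis
  proof (rule has_unit_XY_minimizerI)
    show "- sqrt (rinner n C C + rinner n P P + 2 * D) * Nsp m v \<le> Ffun n m E C P A v" for v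
      using Re_dinner_Xop_add_Yop_ge[OF D] by (simp add: F Nsp_def)
    have "Ffun n m E C P A u = rinner n C x + rinner n P y"
      using u(2,3) by (simp add: Ffun_def pair2_zero[OF A] rinner_def)
    then show "Ffun n m E C P A u = - sqrt (rinner n C C + rinner n P P + 2 * D)"
      using val by simp
  qed (use u x y in \<open>simp_all add: rnorm_eq_one\<close>)
qed

lemma Re_dinner_cmul_plane:
  assumes "rinner n e1 e2 = 0"
  shows "Re (dinner m (cmul x v) (cmul e1 (cmul e2 (de0 v))))
    = - Re (dinner m (Xop (\<lambda>i. rinner n x e2 * e1 i + (- rinner n x e1) * e2 i) v) v)"
proof -
  define w where "w = (\<lambda>i. rinner n x e2 * e1 i + (- rinner n x e1) * e2 i)"
  define Z where "Z = dinner m (cmul x v) (cmul e1 (cmul e2 (de0 v)))"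
  have "Z = dinner m (cmul e2 (cmul e1 (cmul x v))) (de0 v)"
    by (simp add: Z_def dinner_cmul_right)
  moreover have "cnj Z = dinner m (cmul x (cmul e1 (cmul e2 v))) (de0 v)"
  proof -
    have "cmul e1 (cmul e2 (de0 v)) = de0 (cmul e1 (cmul e2 v))"
      by (simp add: cmul_de0 cmul_minus)
    then have "cnj Z = dinner m (cmul e1 (cmul e2 v)) (de0 (cmul x v))"
      by (simp add: Z_def dinner_commute[of m "cmul x v"] dinner_de0_left)
    also have "\<dots> = dinner m (cmul x (cmul e1 (cmul e2 v))) (de0 v)"
    proof -
      have "de0 (cmul x v) = - cmul x (de0 v)" by (simp add: cmul_de0)
      then show ?thesis by (simp add: dinner_minus_right dinner_cmul_right)
    qed
    finally show ?thesis .
  qed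
  ultimately have "Z + cnj Z = 2 * dinner m (cmul w v) (de0 v)"
    using cmul_plane_anticomm[OF assms, of x v]
    by (simp add: dinner_add_left[symmetric] dinner_scale_left w_def)
  moreover have "dinner m (cmul w v) (de0 v) = - cnj (dinner m (Xop w v) v)"
    by (simp add: Xop_def dinner_cmul_left dinner_commute[of m v])
  ultimately have "Re (Z + cnj Z) = - 2 * Re (dinner m (Xop w v) v)"
    by simp
  then show ?thesis by (simp add: Z_def w_def)
qed

text \<open>The cross term of |Yop P v + a (-i) e1 e2 e0 v|^2 is governed by the plane component
  of P rotated by a right angle (cmul_plane_anticomm).\<close>

lemma Re_dinner_Yop_add_plane_ge:
  assumes e: "rinner n e1 e1 = 1" "rinner n e2 e2 = 1" "rinner n e1 e2 = 0"
  shows "- sqrt (rinner n P P + a\<^sup>2 + 2 * \<bar>a\<bar> * sqrt ((rinner n P e1)\<^sup>2 + (rinner n P e2)\<^sup>2)) * Re (dinner m v v)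
    \<le> Re (dinner m (Yop P v + dscale (- \<i> * complex_of_real a) (cmul e1 (cmul e2 (de0 v)))) v)"
proof -
  define f where "f = dscale (- \<i> * complex_of_real a) (cmul e1 (cmul e2 (de0 v)))"
  define w where "w = (\<lambda>i. rinner n P e2 * e1 i + (- rinner n P e1) * e2 i)"
  define r where "r = sqrt ((rinner n P e1)\<^sup>2 + (rinner n P e2)\<^sup>2)"
  have "rinner n w w = r\<^sup>2"
    unfolding w_def rinner_frame[OF e] r_def by (simp add: power2_eq_square)
  then have "\<bar>Re (dinner m (Xop w v) v)\<bar> \<le> r * Re (dinner m v v)"
    by (intro abs_Re_dinner_le) (simp_all add: dinner_Xop_Xop_self r_def)
  moreover have "Re (dinner m (Yop P v) f) = a * Re (dinner m (Xop w v) v)"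
    using Re_dinner_cmul_plane[OF e(3), of P v]
    by (simp add: f_def Yop_def dinner_scale_left dinner_scale_right w_def)
  ultimately have "\<bar>Re (dinner m (Yop P v) f)\<bar> \<le> \<bar>a\<bar> * r * Re (dinner m v v)"
    by (simp add: abs_mult mult.assoc mult_left_mono)
  moreover have "Re (dinner m f f) = a\<^sup>2 * Re (dinner m v v)"
    using e by (simp add: f_def dinner_scale_left dinner_scale_right dinner_cmul_cmul_self
        dinner_de0_de0 power2_eq_square)
  ultimately have "- sqrt (rinner n P P + a\<^sup>2 + 2 * (\<bar>a\<bar> * r)) * Re (dinner m v v)
      \<le> Re (dinner m (Yop P v + f) v)"
    by (intro Re_dinner_add_ge) (simp_all add: dinner_Yop_Yop_self rinner_self_nonneg r_def)
  then show ?thesis by (simp add: f_def r_def mult.assoc)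
qed

lemma has_unit_XY_minimizer_simple_form:
  assumes n: "3 \<le> n" and A: "simple_two_form n A" and C: "\<forall>i<n. C i = 0"
  shows "has_unit_XY_minimizer n m E C P A"
proof -
  obtain a e1 e2 where e: "rinner n e1 e1 = 1" "rinner n e2 e2 = 1" "rinner n e1 e2 = 0"
    and Ae: "\<forall>i<n. \<forall>j<n. A i j = a * (e1 i * e2 j - e1 j * e2 i)"
    using A unfolding simple_two_form_def by blast
  have F: "Ffun n m E C P A v
    = Re (dinner m (Yop P v + dscale (- \<i> * complex_of_real a) (cmul e1 (cmul e2 (de0 v)))) v)" for v
    using C by (simp add: Ffun_def rinner_def rinner_Ysp[symmetric] pair2_omega_simple[OF Ae e(3)]
        dinner_add_left dinner_scale_left)
  define L where "L = sqrt (rinner n P P + a\<^sup>2 + 2 * \<bar>a\<bar> * sqrt ((rinner n P e1)\<^sup>2 + (rinner n P e2)\<^sup>2))"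
  obtain c s y where cs: "c\<^sup>2 + s\<^sup>2 = 1" and y: "rinner n y y = 1"
    and xy: "rinner n (\<lambda>i. - s * e1 i + c * e2 i) y = 0"
    and val: "rinner n P y - a * rinner n (\<lambda>i. c * e1 i + s * e2 i) y = - L"
    using exists_rotated_frame_attaining[OF _ e, of P a] n unfolding L_def by auto
  define x' where "x' = (\<lambda>i. c * e1 i + s * e2 i)"
  define x where "x = (\<lambda>i. - s * e1 i + c * e2 i)"
  have x: "rinner n x x = 1"
    using cs unfolding x_def rinner_frame[OF e] by (simp add: power2_eq_square)
  have "rinner n x y = 0" using xy by (simp add: x_def)
  then obtain u where u: "Nsp m u = 1" "Xop x u = u" "Yop y u = u"
    "\<And>i. i < n \<Longrightarrow> Xsp m E u i = x i" "\<And>i. i < n \<Longrightarrow> Ysp m E u i = y i"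
    by (rule exists_spinor_with_Xsp_Ysp[OF n x y]) blast
  have "cmul e1 (cmul e2 (de0 u)) = cmul x' u"
    using cmul_rotate_plane[OF e cs, of "de0 u"] u(2) by (simp add: Xop_def x_def x'_def)
  moreover have "rinner n z (Ysp m E u) = rinner n z y" for z
    using u(5) by (simp add: rinner_def)
  ultimately have Fu: "Ffun n m E C P A u = rinner n P y - a * rinner n x' y"
    using rinner_Ysp[of P u] rinner_Ysp[of x' u]
    by (simp add: F Yop_def dinner_add_left dinner_scale_left)
  show ?thesis
  proof (rule has_unit_XY_minimizerI)
    show "- L * Nsp m v \<le> Ffun n m E C P A v" for v
      using Re_dinner_Yop_add_plane_ge[OF e] by (simp add: F L_def Nsp_def)
    show "Ffun n m E C P A u = - L"
      using Fu val by (simp add: x'_def)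
  qed (use u x y in \<open>simp_all add: rnorm_eq_one\<close>)
qed

end
section \<open>The twist exchanging X and Y\<close>

lemma cinner_lincomb_left:
  "cinner m (\<lambda>k. x * f k + y * g k) h = x * cinner m f h + y * cinner m g h"
  by (simp add: cinner_def sum.distrib sum_distrib_left algebra_simps)

lemma cinner_lincomb_right:
  "cinner m h (\<lambda>k. x * f k + y * g k) = cnj x * cinner m h f + cnj y * cinner m h g"
  by (simp add: cinner_def sum.distrib sum_distrib_left algebra_simps)

lemma mact_lincomb: "mact m M (\<lambda>k. x * f k + y * g k) = (\<lambda>k. x * mact m M f k + y * mact m M g k)"
  by (simp add: mact_def fun_eq_iff sum.distrib sum_distrib_left algebra_simps)

text \<open>The twist is multiplication by (1 + i e0) / sqrt 2. Since i e0 anticommutes with every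
  e_l and commutes with e0, conjugating by the twist turns Clifford multiplication by e_l e0
  into that by i e_l, and i e_l into - e_l e0, while it fixes e_l e_j e0.\<close>

definition twist :: "spinor2 \<Rightarrow> spinor2" where
  "twist u = (\<lambda>k. complex_of_real (1 / sqrt 2) * fst u k + (complex_of_real (1 / sqrt 2) * \<i>) * snd u k,
              \<lambda>k. (complex_of_real (1 / sqrt 2) * \<i>) * fst u k + complex_of_real (1 / sqrt 2) * snd u k)"

lemma sesquilinear_twist_identities:
  fixes B :: "cvec \<Rightarrow> cvec \<Rightarrow> complex" and a b :: cvec and c :: complex
  assumes left: "\<And>x y f g h. B (\<lambda>k. x * f k + y * g k) h = x * B f h + y * B g h"
    and right: "\<And>x y f g h. B h (\<lambda>k. x * f k + y * g k) = cnj x * B h f + cnj y * B h g"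
    and c: "cnj c = c" "c * c = 1 / 2"
  defines "a' \<equiv> \<lambda>k. c * a k + (c * \<i>) * b k" and "b' \<equiv> \<lambda>k. (c * \<i>) * a k + c * b k"
  shows "B b' a' - B a' b' = \<i> * (B a a - B b b)"
    and "\<i> * (B a' a' - B b' b') = - (B b a - B a b)"
    and "B b' a' + B a' b' = B b a + B a b"
    and "B a' a' + B b' b' = B a a + B b b"
proof -
  have cc: "c * (c * z) = z / 2" for z
    using c(2) by (simp add: mult.assoc[symmetric])
  show "B b' a' - B a' b' = \<i> * (B a a - B b b)" "\<i> * (B a' a' - B b' b') = - (B b a - B a b)"
    "B b' a' + B a' b' = B b a + B a b" "B a' a' + B b' b' = B a a + B b b"
    unfolding a'_def b'_def left right by (simp_all add: c(1) cc algebra_simps)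
qed

lemma twist_coeff: "cnj (complex_of_real (1 / sqrt 2)) = complex_of_real (1 / sqrt 2)"
    "complex_of_real (1 / sqrt 2) * complex_of_real (1 / sqrt 2) = 1 / 2"
  by (simp_all flip: of_real_mult)

lemma dinner_dvec_de0_self:
  "dinner m (dvec m E i (de0 u)) u
    = cinner m (mact m (E i) (snd u)) (fst u) - cinner m (mact m (E i) (fst u)) (snd u)"
  by (simp add: dinner_def dvec_def de0_def cinner_def sum_negf)

lemma dinner_i_dvec_self:
  "dinner m (dscale \<i> (dvec m E i u)) u
    = \<i> * (cinner m (mact m (E i) (fst u)) (fst u) - cinner m (mact m (E i) (snd u)) (snd u))"
  by (simp add: dinner_def dvec_def dscale_def cinner_def sum_negf sum_distrib_left algebra_simps)

lemma dinner_dvec_dvec_de0_self: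
  "dinner m (dvec m E i (dvec m E j (de0 u))) u
    = cinner m (mact m (E i) (mact m (E j) (snd u))) (fst u)
      + cinner m (mact m (E i) (mact m (E j) (fst u))) (snd u)"
  by (simp add: dinner_def dvec_def de0_def cinner_def mact_def sum_negf)

lemma Xsp_twist: "Xsp m E (twist u) = Ysp m E u"
proof
  fix i
  show "Xsp m E (twist u) i = Ysp m E u i"
    unfolding Xsp_def Ysp_def dinner_dvec_de0_self dinner_i_dvec_self twist_def fst_conv snd_conv
    by (subst sesquilinear_twist_identities(1)[OF _ _ twist_coeff, of "\<lambda>f g. cinner m (mact m (E i) f) g"])
      (simp_all add: mact_lincomb cinner_lincomb_left cinner_lincomb_right)
qed

lemma Ysp_twist: "Ysp m E (twist u) = (\<lambda>i. - Xsp m E u i)"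
proof
  fix i
  show "Ysp m E (twist u) i = - Xsp m E u i"
    unfolding Xsp_def Ysp_def dinner_dvec_de0_self dinner_i_dvec_self twist_def fst_conv snd_conv
    by (subst sesquilinear_twist_identities(2)[OF _ _ twist_coeff, of "\<lambda>f g. cinner m (mact m (E i) f) g"])
      (simp_all add: mact_lincomb cinner_lincomb_left cinner_lincomb_right)
qed

lemma omega_twist: "omega m E (twist u) = omega m E u"
proof (intro ext)
  fix i j
  show "omega m E (twist u) i j = omega m E u i j"
    unfolding omega_def dinner_dvec_dvec_de0_self twist_def fst_conv snd_conv
    by (subst sesquilinear_twist_identities(3)[OF _ _ twist_coeff,
          of "\<lambda>f g. cinner m (mact m (E i) (mact m (E j) f)) g"])
      (simp_all add: mact_lincomb cinner_lincomb_left cinner_lincomb_right add.commute)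
qed

lemma Nsp_twist: "Nsp m (twist u) = Nsp m u"
  unfolding Nsp_def dinner_def twist_def fst_conv snd_conv
  by (subst sesquilinear_twist_identities(4)[OF _ _ twist_coeff, of "cinner m"])
    (simp_all add: cinner_lincomb_left cinner_lincomb_right)

lemma twist_surj: "\<exists>w. twist w = v"
proof
  let ?c = "complex_of_real (1 / sqrt 2)"
  show "twist (\<lambda>k. ?c * fst v k - (?c * \<i>) * snd v k, \<lambda>k. - (?c * \<i>) * fst v k + ?c * snd v k) = v"
    by (simp add: twist_def prod_eq_iff fun_eq_iff algebra_simps flip: of_real_mult)
qed

lemma Ffun_twist: "Ffun n m E C P A (twist v) = Ffun n m E (\<lambda>i. - P i) C A v"
  by (simp add: Ffun_def Xsp_twist Ysp_twist omega_twist rinner_def sum_negf)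

lemma has_unit_XY_minimizer_twist:
  assumes "has_unit_XY_minimizer n m E (\<lambda>i. - P i) C A"
  shows "has_unit_XY_minimizer n m E C P A"
proof -
  obtain w where w: "spnorm m w = 1" "Nsp m w = 1" "rnorm n (Xsp m E w) = 1" "rnorm n (Ysp m E w) = 1"
    and min: "\<And>v. spnorm m v = 1 \<Longrightarrow> Ffun n m E (\<lambda>i. - P i) C A w \<le> Ffun n m E (\<lambda>i. - P i) C A v"
    using assms unfolding has_unit_XY_minimizer_def by blast
  have spnorm_twist: "spnorm m (twist v) = spnorm m v" for v
    by (simp add: spnorm_def Nsp_twist)
  have "Ffun n m E C P A (twist w) \<le> Ffun n m E C P A v" if "spnorm m v = 1" for v
  proof -
    obtain v' where "twist v' = v" using twist_surj by blast
    then show ?thesis using min[of v'] that by (auto simp: Ffun_twist spnorm_twist)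
  qed
  moreover have "rnorm n (\<lambda>i. - Xsp m E w i) = rnorm n (Xsp m E w)"
    by (simp add: rnorm_def rinner_def)
  ultimately show ?thesis
    unfolding has_unit_XY_minimizer_def using w
    by (intro exI[of _ "twist w"]) (simp add: spnorm_twist Nsp_twist Xsp_twist Ysp_twist)
qed

theorem mainTheorem12:
  fixes n m :: nat and E :: "nat \<Rightarrow> cmat" and C P :: "nat \<Rightarrow> real"
    and A :: "nat \<Rightarrow> nat \<Rightarrow> real"
  assumes "n \<ge> 3" and "is_spinor_module n m E" and "is_two_form n A"
    and "(\<forall>i<n. \<forall>j<n. A i j = 0)
         \<or> (simple_two_form n A \<and> (\<forall>i<n. C i = 0))
         \<or> (simple_two_form n A \<and> (\<forall>i<n. P i = 0))"
  shows "\<exists>u. spnorm m u = 1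
            \<and> (\<forall>v. spnorm m v = 1 \<longrightarrow> Ffun n m E C P A u \<le> Ffun n m E C P A v)
            \<and> Nsp m u = 1 \<and> rnorm n (Xsp m E u) = 1 \<and> rnorm n (Ysp m E u) = 1"
proof -
  \<comment> \<open>The hypothesis is_two_form n A is implied by each of the three alternatives.\<close>
  interpret spinor_module n m E
    by (rule spinor_module.intro) (rule assms(2))
  from assms(4) have "has_unit_XY_minimizer n m E C P A"
  proof (elim disjE conjE)
    assume "\<forall>i<n. \<forall>j<n. A i j = 0"
    then show ?thesis by (rule has_unit_XY_minimizer_zero_form[OF assms(1)])
  next
    assume "simple_two_form n A" "\<forall>i<n. C i = 0"
    then show ?thesis by (rule has_unit_XY_minimizer_simple_form[OF assms(1)])
  next
    assume A: "simple_two_form n A" and "\<forall>i<n. P i = 0"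
    then have "\<forall>i<n. - P i = 0" by simp
    then have "has_unit_XY_minimizer n m E (\<lambda>i. - P i) C A"
      by (rule has_unit_XY_minimizer_simple_form[OF assms(1) A])
    then show ?thesis by (rule has_unit_XY_minimizer_twist)
  qed
  then show ?thesis unfolding has_unit_XY_minimizer_def .
qed

end
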